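(* Let $p\ge1$, let $A_1,\dots,A_p\ge1$ and $n_1,\dots,n_p\ge0$ be integers, and let $P(X_1,\dots,X_p)\in\mathbb{Q}[X_1,\dots,X_p]$. Let $z_1,\dots,z_p$ be complex numbers with $|z_1|>1$ and $|z_j|\ge1$ for $j=2,\dots,p$. Then the series $$S=\sum_{k_1\ge\cdots\ge k_p\ge1}\frac{P(k_1,\dots,k_p)}{(k_1)_{n_1+1}^{A_1}\cdots(k_p)_{n_p+1}^{A_p}}\,z_1^{-k_1}\cdots z_p^{-k_p}$$ can be written as a finite linear combination, with coefficients Laurent polynomials in $\mathbb{Q}[z_1^{\pm1},\dots,z_p^{\pm1}]$, of multiple polylogarithms $\mathrm{La}_{s_1,\dots,s_q}(1/\widehat z_1,\dots,1/\widehat z_q)$, where $0\le q\le p$, $s_1,\dots,s_q\in\mathbb{Z}$ satisfy $\sum_{j=1}^q\max(s_j,0)\le\sum_{j=1}^pA_j$, and each $\widehat z_i$ is a product of some of the $z_1,\dots,z_p$.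
   Context: $(\alpha)_m=\alpha(\alpha+1)\cdots(\alpha+m-1)$ is the Pochhammer symbol. For $q\ge1$, integers $s_1,\dots,s_q\in\mathbb{Z}$ and complex $w_1,\dots,w_q$ (with $|w_1|<1$, $|w_i|\le1$), the large multiple polylogarithm is $\mathrm{La}_{s_1,\dots,s_q}(w_1,\dots,w_q)=\sum_{k_1\ge k_2\ge\cdots\ge k_q\ge1}\frac{w_1^{k_1}\cdots w_q^{k_q}}{k_1^{s_1}\cdots k_q^{s_q}}$; its weight is $\sum_j\max(s_j,0)$. The polylogarithm of depth $q=0$ is the constant function $1$. *)

theory Defs
  imports "HOL-Analysis.Analysis"
begin

text \<open>Index tuples k_1 \<ge> k_2 \<ge> ... \<ge> k_q \<ge> 1, as lists of length q
  (list position i corresponds to the index i+1 of the paper).\<close>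
definition chains :: "nat \<Rightarrow> nat list set" where
  "chains q = {ks. length ks = q \<and> sorted_wrt (\<lambda>a b. a \<ge> b) ks \<and> (\<forall>k\<in>set ks. 1 \<le> k)}"

text \<open>Large multiple polylogarithm La_{s_1..s_q}(w_1..w_q); depth 0 gives 1.\<close>
definition La :: "int list \<Rightarrow> complex list \<Rightarrow> complex" where
  "La ss ws = infsum (\<lambda>ks. \<Prod>i<length ss. (ws ! i) ^ (ks ! i) / (of_nat (ks ! i)) powi (ss ! i))
                     (chains (length ss))"

text \<open>A polynomial in Q[X_1..X_p], given by a list of monomials (exponent vector, coefficient),
  evaluated at an integer point k (a list of length p).\<close>
definition poly_eval :: "((nat \<Rightarrow> nat) \<times> rat) list \<Rightarrow> nat list \<Rightarrow> complex" where
  "poly_eval P k = (\<Sum>(e, c)\<leftarrow>P. of_rat c * (\<Prod>j<length k. (of_nat (k ! j)) ^ (e j)))"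

text \<open>A Laurent polynomial in Q[z_1^{\<plusminus>1}..z_p^{\<plusminus>1}], given by a list of monomials,
  evaluated at z (variables z 0, ..., z (p-1)).\<close>
definition laurent_eval :: "((nat \<Rightarrow> int) \<times> rat) list \<Rightarrow> nat \<Rightarrow> (nat \<Rightarrow> complex) \<Rightarrow> complex" where
  "laurent_eval L p z = (\<Sum>(e, c)\<leftarrow>L. of_rat c * (\<Prod>j<p. (z j) powi (e j)))"

text \<open>The series S of the theorem (indices shifted: j ranges over 0..p-1).\<close>
definition Sser :: "nat \<Rightarrow> (nat \<Rightarrow> nat) \<Rightarrow> (nat \<Rightarrow> nat) \<Rightarrow> ((nat \<Rightarrow> nat) \<times> rat) list
                     \<Rightarrow> (nat \<Rightarrow> complex) \<Rightarrow> complex" where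
  "Sser p A n P z = infsum (\<lambda>ks. poly_eval P ks *
       (\<Prod>j<p. (z j) powi (- int (ks ! j)) / (pochhammer (of_nat (ks ! j)) (n j + 1)) ^ (A j)))
     (chains p)"

end

(* Each summand is a product over j of factors k_j -> z_j^(-k_j) k_j^(e_j) / (k_j)_(n_j+1)^(A_j).
   By partial fractions such a factor, and any product of two factors in the same index, is a
   finite sum of terms c (k + d)^(-s); because the shifts of a Pochhammer symbol are distinct, the
   largest positive s occurring in the j-th factor is A_j. A term with shift d > 0 is brought to
   shift 0 by the substitution k_j -> k_j - d in the chain k_1 >= ... >= k_p. This changes the sum
   only by boundary terms, where k_j is within d of k_(j+1) or of k_(j-1); there the factor merges
   with its neighbour into a single factor in the variable z_j z_(j+1) (resp. z_(j-1) z_j), and the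
   weights add up at most. Inducting on the number of factors, and then on the number of terms and
   of nonzero shifts, one arrives at products of single terms c k^(-s) w^k, whose sums over chains
   are the multiple polylogarithms La_s(1/z^_1, ..., 1/z^_q). Absolute convergence throughout
   comes from |z_1| > 1: the first factor decays geometrically in k_1 >= k_j. *)
theory Submission
  imports Defs "HOL-Real_Asymp.Real_Asymp"
begin

section \<open>Chains and insertion of one index\<close>

lemma mem_chains:
  "ks \<in> chains n \<longleftrightarrow> length ks = n \<and> sorted_wrt (\<ge>) ks \<and> (\<forall>k\<in>set ks. 1 \<le> k)"
  by (simp add: chains_def)

lemma chains_length: "ks \<in> chains n \<Longrightarrow> length ks = n"
  by (simp add: mem_chains)

lemma chains_nth_ge1: "ks \<in> chains n \<Longrightarrow> i < n \<Longrightarrow> 1 \<le> ks ! i"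
  by (simp add: mem_chains)

lemma chains_nth_antimono: "ks \<in> chains n \<Longrightarrow> i \<le> j \<Longrightarrow> j < n \<Longrightarrow> ks ! j \<le> ks ! i"
  unfolding mem_chains by (metis le_neq_implies_less order.refl sorted_wrt_nth_less)

lemma chains_hd_bound: "ks \<in> chains n \<Longrightarrow> k \<in> set ks \<Longrightarrow> 1 \<le> k \<and> k \<le> hd ks"
  unfolding mem_chains by (cases ks) auto

lemma chains_0: "chains 0 = {[]}"
  by (auto simp: mem_chains)

lemma append_Cons_in_chains_iff:
  "as @ m # bs \<in> chains (Suc (length as + length bs)) \<longleftrightarrow>
   as @ bs \<in> chains (length as + length bs) \<and> (case bs of [] \<Rightarrow> 1 | b # _ \<Rightarrow> b) \<le> m \<and>
   (as \<noteq> [] \<longrightarrow> m \<le> last as)"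
  by (cases bs; cases as rule: rev_exhaust)
     (auto simp: mem_chains sorted_wrt_append intro: order.trans)

definition insert_at :: "nat \<Rightarrow> nat list \<Rightarrow> nat \<Rightarrow> nat list" where
  "insert_at a ks m = take a ks @ m # drop a ks"

definition lower_at :: "nat \<Rightarrow> nat list \<Rightarrow> nat" where
  "lower_at a ks = (if a < length ks then ks ! a else 1)"

text \<open>For \<open>d = 0\<close> these are the pairs \<open>(ks, m)\<close> for which \<open>insert_at a ks m\<close> is again a chain;
  for general \<open>d\<close> the admissible range of \<open>m\<close> is translated by \<open>d\<close>.\<close>
definition insert_dom :: "nat \<Rightarrow> nat \<Rightarrow> nat \<Rightarrow> (nat list \<times> nat) set" where
  "insert_dom n a d =
     {(ks, m). ks \<in> chains n \<and> lower_at a ks + d \<le> m \<and> (0 < a \<longrightarrow> m \<le> ks ! (a - 1) + d)}"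

lemma lower_at_le_prev: "ks \<in> chains n \<Longrightarrow> 0 < a \<Longrightarrow> a \<le> n \<Longrightarrow> lower_at a ks \<le> ks ! (a - 1)"
  unfolding lower_at_def using chains_nth_antimono[of ks n "a - 1" a] chains_nth_ge1[of ks n "a - 1"]
  by (auto simp: chains_length)

lemma insert_at_in_chains:
  assumes "a \<le> n" "(ks, m) \<in> insert_dom n a 0"
  shows "insert_at a ks m \<in> chains (Suc n)"
proof -
  have ks: "ks \<in> chains n" and lower: "lower_at a ks \<le> m" and upper: "0 < a \<longrightarrow> m \<le> ks ! (a - 1)"
    using assms(2) by (auto simp: insert_dom_def)
  have len: "length (take a ks) + length (drop a ks) = n"
    using assms(1) chains_length[OF ks] by simp
  have "(case drop a ks of [] \<Rightarrow> 1 | b # _ \<Rightarrow> b) \<le> m"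
    using lower assms(1) chains_length[OF ks]
    by (cases "a < n") (auto simp: lower_at_def Cons_nth_drop_Suc[symmetric])
  moreover have "take a ks \<noteq> [] \<longrightarrow> m \<le> last (take a ks)"
    using upper assms(1) chains_length[OF ks] by (auto simp: last_conv_nth min_def)
  ultimately have "take a ks @ m # drop a ks \<in> chains (Suc (length (take a ks) + length (drop a ks)))"
    unfolding append_Cons_in_chains_iff using ks len by simp
  then show ?thesis
    using len by (simp add: insert_at_def)
qed

lemma chains_Suc_remove_nth:
  assumes "a \<le> n" "ms \<in> chains (Suc n)"
  shows "(take a ms @ drop (Suc a) ms, ms ! a) \<in> insert_dom n a 0"
    and "ms = insert_at a (take a ms @ drop (Suc a) ms) (ms ! a)"
proof -
  have len: "length ms = Suc n"
    using assms(2) by (rule chains_length)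
  have split: "ms = take a ms @ ms ! a # drop (Suc a) ms"
    using len assms(1) by (simp add: id_take_nth_drop)
  have "take a ms @ ms ! a # drop (Suc a) ms
          \<in> chains (Suc (length (take a ms) + length (drop (Suc a) ms)))"
    using assms len split by simp
  then have ks: "take a ms @ drop (Suc a) ms \<in> chains n"
    and lower: "(case drop (Suc a) ms of [] \<Rightarrow> 1 | b # _ \<Rightarrow> b) \<le> ms ! a"
    and upper: "take a ms \<noteq> [] \<longrightarrow> ms ! a \<le> last (take a ms)"
    unfolding append_Cons_in_chains_iff using len assms(1) by auto
  have "lower_at a (take a ms @ drop (Suc a) ms) \<le> ms ! a"
    using lower len assms(1)
    by (cases "a < n") (auto simp: lower_at_def nth_append Cons_nth_drop_Suc[symmetric])
  moreover have "0 < a \<longrightarrow> ms ! a \<le> (take a ms @ drop (Suc a) ms) ! (a - 1)"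
    using upper len assms(1) by (auto simp: nth_append last_conv_nth)
  ultimately show "(take a ms @ drop (Suc a) ms, ms ! a) \<in> insert_dom n a 0"
    using ks by (simp add: insert_dom_def)
  show "ms = insert_at a (take a ms @ drop (Suc a) ms) (ms ! a)"
    using split len assms(1) by (simp add: insert_at_def)
qed

lemma chains_Suc_eq_image_insert_at:
  assumes "a \<le> n"
  shows "chains (Suc n) = (\<lambda>(ks, m). insert_at a ks m) ` insert_dom n a 0"
  using insert_at_in_chains[OF assms] chains_Suc_remove_nth[OF assms]
  by (auto intro!: rev_image_eqI)

lemma inj_on_insert_at:
  assumes "a \<le> n"
  shows "inj_on (\<lambda>(ks, m). insert_at a ks m) (insert_dom n a d)"
proof (rule inj_onI, clarify)
  fix ks m ks' m'
  assume eq: "insert_at a ks m = insert_at a ks' m'"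
    and "(ks, m) \<in> insert_dom n a d" "(ks', m') \<in> insert_dom n a d"
  then have "length ks = n" "length ks' = n"
    by (auto simp: insert_dom_def chains_length)
  then have "take a ks = take a ks' \<and> m # drop a ks = m' # drop a ks'"
    using eq assms unfolding insert_at_def by (subst (asm) append_eq_append_conv) auto
  then show "ks = ks' \<and> m = m'"
    by (metis append_take_drop_id list.inject)
qed

lemma insert_dom_shift:
  "(\<lambda>(ks, m). (ks, m + d)) ` insert_dom n a 0 = insert_dom n a d"
proof (rule set_eqI, clarify, rule iffI)
  fix ks m
  assume "(ks, m) \<in> insert_dom n a d"
  then have "(ks, m - d) \<in> insert_dom n a 0" and "m = m - d + d"
    by (auto simp: insert_dom_def)
  then show "(ks, m) \<in> (\<lambda>(ks, m). (ks, m + d)) ` insert_dom n a 0"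
    by (metis (no_types, lifting) case_prod_conv image_eqI)
qed (auto simp: insert_dom_def)

lemma insert_dom_lower_strips:
  assumes "a \<le> n"
  shows "{(ks, m). ks \<in> chains n \<and> lower_at a ks \<le> m \<and> (0 < a \<longrightarrow> m \<le> ks ! (a - 1) + d)}
       = insert_dom n a d \<union> (\<Union>t<d. (\<lambda>ks. (ks, lower_at a ks + t)) ` chains n)"
    (is "?U = _ \<union> ?L")
proof (intro equalityI subsetI)
  fix x assume "x \<in> ?U"
  then obtain ks m where x: "x = (ks, m)" and ks: "ks \<in> chains n" and lower: "lower_at a ks \<le> m"
    and upper: "0 < a \<longrightarrow> m \<le> ks ! (a - 1) + d" by blast
  show "x \<in> insert_dom n a d \<union> ?L"
  proof (cases "lower_at a ks + d \<le> m")
    case True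
    then show ?thesis using x ks upper by (simp add: insert_dom_def)
  next
    case False
    then have "m - lower_at a ks < d" and "x = (ks, lower_at a ks + (m - lower_at a ks))"
      using x lower by auto
    then show ?thesis using ks by blast
  qed
next
  fix x assume "x \<in> insert_dom n a d \<union> ?L"
  then show "x \<in> ?U"
  proof
    assume "x \<in> ?L"
    then obtain ks t where "x = (ks, lower_at a ks + t)" "ks \<in> chains n" "t < d" by blast
    then show "x \<in> ?U" using lower_at_le_prev[OF _ _ assms, of ks] by auto
  qed (auto simp: insert_dom_def)
qed

lemma insert_dom_upper_strips:
  assumes "a \<le> n"
  shows "{(ks, m). ks \<in> chains n \<and> lower_at a ks \<le> m \<and> (0 < a \<longrightarrow> m \<le> ks ! (a - 1) + d)}
     = insert_dom n a 0 \<union> (if a = 0 then {} else (\<Union>t\<in>{1..d}. (\<lambda>ks. (ks, ks ! (a - 1) + t)) ` chains n))"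
    (is "?U = _ \<union> (if a = 0 then {} else ?H)")
proof (intro equalityI subsetI)
  fix x assume "x \<in> ?U"
  then obtain ks m where x: "x = (ks, m)" and ks: "ks \<in> chains n" and lower: "lower_at a ks \<le> m"
    and upper: "0 < a \<longrightarrow> m \<le> ks ! (a - 1) + d" by blast
  show "x \<in> insert_dom n a 0 \<union> (if a = 0 then {} else ?H)"
  proof (cases "0 < a \<and> ks ! (a - 1) < m")
    case True
    then have "m - ks ! (a - 1) \<in> {1..d}" and "x = (ks, ks ! (a - 1) + (m - ks ! (a - 1)))"
      using x upper by auto
    then have "x \<in> ?H" using ks by blast
    then show ?thesis using True by simp
  next
    case False
    then show ?thesis using x ks lower by (auto simp: insert_dom_def)
  qed
next
  fix x assume x: "x \<in> insert_dom n a 0 \<union> (if a = 0 then {} else ?H)"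
  show "x \<in> ?U"
  proof (cases "x \<in> insert_dom n a 0")
    case False
    then have "0 < a" "x \<in> ?H" using x by (auto split: if_splits)
    then obtain ks t where "x = (ks, ks ! (a - 1) + t)" "ks \<in> chains n" "t \<in> {1..d}" by blast
    then show ?thesis using lower_at_le_prev[OF _ \<open>0 < a\<close> assms, of ks] by auto
  qed (auto simp: insert_dom_def)
qed

lemma infsum_union_graphs:
  fixes \<Phi> :: "'a \<times> 'b \<Rightarrow> 'c::{topological_comm_monoid_add, t2_space}"
  assumes "finite T" "\<And>t. t \<in> T \<Longrightarrow> (\<lambda>x. \<Phi> (x, f t x)) summable_on A"
    and "\<And>s t x. f s x = f t x \<Longrightarrow> s = t"
  shows "\<Phi> summable_on (\<Union>t\<in>T. (\<lambda>x. (x, f t x)) ` A)"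
    and "infsum \<Phi> (\<Union>t\<in>T. (\<lambda>x. (x, f t x)) ` A) = (\<Sum>t\<in>T. infsum (\<lambda>x. \<Phi> (x, f t x)) A)"
proof -
  have inj: "inj_on (\<lambda>x. (x, f t x)) A" for t
    by (rule inj_onI) simp
  have summable: "\<Phi> summable_on (\<lambda>x. (x, f t x)) ` A" if "t \<in> T" for t
    using assms(2)[OF that] by (simp add: summable_on_reindex[OF inj] comp_def)
  have disjoint: "(\<lambda>x. (x, f s x)) ` A \<inter> (\<lambda>x. (x, f t x)) ` A = {}" if "s \<noteq> t" for s t
    using assms(3) that by blast
  show "\<Phi> summable_on (\<Union>t\<in>T. (\<lambda>x. (x, f t x)) ` A)"
    by (rule summable_on_finite_union_disjoint[OF assms(1) summable disjoint])
  show "infsum \<Phi> (\<Union>t\<in>T. (\<lambda>x. (x, f t x)) ` A) = (\<Sum>t\<in>T. infsum (\<lambda>x. \<Phi> (x, f t x)) A)"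
  proof -
    have "(\<Sum>t\<in>T. infsum (\<lambda>x. \<Phi> (x, f t x)) A) = (\<Sum>t\<in>T. infsum \<Phi> ((\<lambda>x. (x, f t x)) ` A))"
      by (simp add: infsum_reindex[OF inj] comp_def)
    also have "\<dots> = infsum \<Phi> (\<Union>t\<in>T. (\<lambda>x. (x, f t x)) ` A)"
      by (rule sum_infsum[OF assms(1) summable disjoint])
    finally show ?thesis ..
  qed
qed

text \<open>Enlarging the range of the inserted index to \<open>[lower_at a ks, ks ! (a - 1) + d]\<close> and
  cutting it at the lower end or at the upper end gives two decompositions; comparing them
  expresses the sum over the translated domain by the original one and boundary sums.\<close>
lemma infsum_insert_dom_shift:
  fixes \<Phi> :: "nat list \<times> nat \<Rightarrow> complex"
  assumes "a \<le> n"
    and "\<Phi> summable_on insert_dom n a 0" "\<Phi> summable_on insert_dom n a d"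
    and "\<And>t. t < d \<Longrightarrow> (\<lambda>ks. \<Phi> (ks, lower_at a ks + t)) summable_on chains n"
    and "\<And>t. 0 < a \<Longrightarrow> t \<in> {1..d} \<Longrightarrow> (\<lambda>ks. \<Phi> (ks, ks ! (a - 1) + t)) summable_on chains n"
  shows "infsum \<Phi> (insert_dom n a d) = infsum \<Phi> (insert_dom n a 0)
           - (\<Sum>t<d. infsum (\<lambda>ks. \<Phi> (ks, lower_at a ks + t)) (chains n))
           + (if a = 0 then 0 else (\<Sum>t\<in>{1..d}. infsum (\<lambda>ks. \<Phi> (ks, ks ! (a - 1) + t)) (chains n)))"
proof -
  define U where "U = {(ks, m). ks \<in> chains n \<and> lower_at a ks \<le> m \<and> (0 < a \<longrightarrow> m \<le> ks ! (a - 1) + d)}"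
  define L where "L = (\<Union>t<d. (\<lambda>ks. (ks, lower_at a ks + t)) ` chains n)"
  define H where "H = (\<Union>t\<in>{1..d}. (\<lambda>ks. (ks, ks ! (a - 1) + t)) ` chains n)"
  have L_sums: "\<Phi> summable_on L"
    "infsum \<Phi> L = (\<Sum>t<d. infsum (\<lambda>ks. \<Phi> (ks, lower_at a ks + t)) (chains n))"
    unfolding L_def by (rule infsum_union_graphs; use assms(4) in simp)+
  have H_sums: "\<Phi> summable_on H"
    "infsum \<Phi> H = (\<Sum>t\<in>{1..d}. infsum (\<lambda>ks. \<Phi> (ks, ks ! (a - 1) + t)) (chains n))" if "0 < a"
    unfolding H_def by (rule infsum_union_graphs; use assms(5) that in simp)+
  have U_lower: "infsum \<Phi> U = infsum \<Phi> (insert_dom n a d) + infsum \<Phi> L"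
    unfolding U_def insert_dom_lower_strips[OF assms(1)] L_def[symmetric]
    by (rule infsum_Un_disjoint[OF assms(3) L_sums(1)]) (auto simp: insert_dom_def L_def)
  have U_upper: "infsum \<Phi> U = infsum \<Phi> (insert_dom n a 0) + (if a = 0 then 0 else infsum \<Phi> H)"
  proof (cases "a = 0")
    case False
    have "infsum \<Phi> (insert_dom n a 0 \<union> H) = infsum \<Phi> (insert_dom n a 0) + infsum \<Phi> H"
      by (rule infsum_Un_disjoint[OF assms(2) H_sums(1)]) (use False in \<open>auto simp: insert_dom_def H_def\<close>)
    then show ?thesis
      unfolding U_def insert_dom_upper_strips[OF assms(1)] H_def[symmetric] using False by simp
  next
    case True
    show ?thesis
      unfolding U_def insert_dom_upper_strips[OF assms(1)] using True by simp
  qed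
  have "infsum \<Phi> (insert_dom n a d) = infsum \<Phi> (insert_dom n a 0) + (if a = 0 then 0 else infsum \<Phi> H) - infsum \<Phi> L"
    using U_lower U_upper by (simp add: eq_diff_eq)
  then show ?thesis
    using L_sums(2) H_sums(2) by (cases "a = 0") (simp_all add: diff_add_eq)
qed

section \<open>Sums of products over chains\<close>

definition prod_slots :: "(nat \<Rightarrow> complex) list \<Rightarrow> nat list \<Rightarrow> complex" where
  "prod_slots fs ks = prod_list (map2 (\<lambda>f k. f k) fs ks)"

definition chain_sum :: "(nat \<Rightarrow> complex) list \<Rightarrow> complex" where
  "chain_sum fs = infsum (prod_slots fs) (chains (length fs))"

lemma prod_slots_Nil [simp]: "prod_slots [] ks = 1" "prod_slots fs [] = 1"
  by (simp_all add: prod_slots_def)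

lemma prod_slots_Cons [simp]: "prod_slots (f # fs) (k # ks) = f k * prod_slots fs ks"
  by (simp add: prod_slots_def)

lemma prod_slots_append:
  "length fs = length ks \<Longrightarrow> prod_slots (fs @ gs) (ks @ ms) = prod_slots fs ks * prod_slots gs ms"
  by (simp add: prod_slots_def)

lemma prod_slots_conv_prod:
  "length ks = length fs \<Longrightarrow> prod_slots fs ks = (\<Prod>i<length fs. (fs ! i) (ks ! i))"
proof (induction fs arbitrary: ks)
  case (Cons f fs)
  then show ?case
    by (cases ks) (auto simp: prod.lessThan_Suc_shift simp del: prod.lessThan_Suc)
qed simp

lemma prod_slots_middle:
  assumes "length ks = length fs + Suc (length gs)"
  shows "prod_slots (fs @ f # gs) ks
           = prod_slots fs (take (length fs) ks) * f (ks ! length fs) * prod_slots gs (drop (Suc (length fs)) ks)"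
proof -
  have "ks = take (length fs) ks @ ks ! length fs # drop (Suc (length fs)) ks"
    using assms by (simp add: id_take_nth_drop)
  then have "prod_slots (fs @ f # gs) ks
               = prod_slots (fs @ f # gs) (take (length fs) ks @ ks ! length fs # drop (Suc (length fs)) ks)"
    by (rule arg_cong)
  also have "\<dots> = prod_slots fs (take (length fs) ks) * prod_slots (f # gs) (ks ! length fs # drop (Suc (length fs)) ks)"
    by (rule prod_slots_append) (use assms in simp)
  finally show ?thesis
    by (simp add: mult.assoc)
qed

lemma prod_slots_middle_cmult:
  "length ks = length fs + Suc (length gs) \<Longrightarrow>
   prod_slots (fs @ (\<lambda>k. c * f k) # gs) ks = c * prod_slots (fs @ f # gs) ks"
  by (simp add: prod_slots_middle algebra_simps)

lemma prod_slots_insert_at: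
  "length ks = length fs + length gs \<Longrightarrow>
   prod_slots (fs @ g # gs) (insert_at (length fs) ks m)
     = prod_slots fs (take (length fs) ks) * g m * prod_slots gs (drop (length fs) ks)"
  by (simp add: insert_at_def prod_slots_append)

lemma chain_sum_eq_infsum_insert_dom:
  assumes "length hs = Suc n" "a \<le> n"
  shows "chain_sum hs = infsum (\<lambda>(ks, m). prod_slots hs (insert_at a ks m)) (insert_dom n a 0)"
    and "prod_slots hs summable_on chains (Suc n) \<longleftrightarrow>
           (\<lambda>(ks, m). prod_slots hs (insert_at a ks m)) summable_on insert_dom n a 0"
proof -
  have eq: "chains (Suc n) = (\<lambda>(ks, m). insert_at a ks m) ` insert_dom n a 0"
    by (rule chains_Suc_eq_image_insert_at[OF assms(2)])
  note inj = inj_on_insert_at[OF assms(2), of 0]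
  show "chain_sum hs = infsum (\<lambda>(ks, m). prod_slots hs (insert_at a ks m)) (insert_dom n a 0)"
    unfolding chain_sum_def assms(1) eq infsum_reindex[OF inj] by (rule infsum_cong) auto
  show "prod_slots hs summable_on chains (Suc n) \<longleftrightarrow>
          (\<lambda>(ks, m). prod_slots hs (insert_at a ks m)) summable_on insert_dom n a 0"
    unfolding eq summable_on_reindex[OF inj] by (rule summable_on_cong) auto
qed

text \<open>Summation by parts in one slot: translating the function in slot \<open>length fs\<close> by \<open>d\<close> costs
  the terms where the index of that slot hits its lower bound, and gains those where it exceeds
  its upper bound, i.e. the index of the previous slot, by at most \<open>d\<close>.\<close>
lemma chain_sum_shift:
  fixes fs gs :: "(nat \<Rightarrow> complex) list"
  defines "a \<equiv> length fs" and "n \<equiv> length fs + length gs"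
  assumes "prod_slots (fs @ g # gs) summable_on chains (Suc n)"
    and "prod_slots (fs @ (\<lambda>k. g (k + d)) # gs) summable_on chains (Suc n)"
    and "\<And>t. t < d \<Longrightarrow>
           (\<lambda>ks. prod_slots (fs @ g # gs) (insert_at a ks (lower_at a ks + t))) summable_on chains n"
    and "\<And>t. fs \<noteq> [] \<Longrightarrow> t \<in> {1..d} \<Longrightarrow>
           (\<lambda>ks. prod_slots (fs @ g # gs) (insert_at a ks (ks ! (a - 1) + t))) summable_on chains n"
  shows "chain_sum (fs @ (\<lambda>k. g (k + d)) # gs) = chain_sum (fs @ g # gs)
           - (\<Sum>t<d. infsum (\<lambda>ks. prod_slots (fs @ g # gs) (insert_at a ks (lower_at a ks + t))) (chains n))
           + (if fs = [] then 0
              else \<Sum>t\<in>{1..d}. infsum (\<lambda>ks. prod_slots (fs @ g # gs) (insert_at a ks (ks ! (a - 1) + t))) (chains n))"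
proof -
  define \<Phi> where "\<Phi> = (\<lambda>(ks, m). prod_slots (fs @ g # gs) (insert_at a ks m))"
  have an: "a \<le> n" and len: "length (fs @ g # gs) = Suc n" "length (fs @ (\<lambda>k. g (k + d)) # gs) = Suc n"
    by (simp_all add: a_def n_def)
  have shifted: "(\<lambda>(ks, m). prod_slots (fs @ (\<lambda>k. g (k + d)) # gs) (insert_at a ks m)) x
                   = (\<Phi> \<circ> (\<lambda>(ks, m). (ks, m + d))) x" if x_dom: "x \<in> insert_dom n a 0" for x
  proof -
    obtain ks m where x: "x = (ks, m)" and "ks \<in> chains n"
      using x_dom by (cases x) (auto simp: insert_dom_def)
    then have l: "length ks = length fs + length gs"
      by (simp add: chains_length n_def)
    show ?thesis
      unfolding x \<Phi>_def comp_def case_prod_conv a_def by (simp only: prod_slots_insert_at[OF l])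
  qed
  have inj: "inj_on (\<lambda>(ks, m :: nat). (ks, m + d)) (insert_dom n a 0)"
    by (rule inj_onI) auto
  have shifted_sum: "chain_sum (fs @ (\<lambda>k. g (k + d)) # gs) = infsum \<Phi> (insert_dom n a d)"
    unfolding chain_sum_eq_infsum_insert_dom(1)[OF len(2) an] insert_dom_shift[of d n a, symmetric]
      infsum_reindex[OF inj] by (rule infsum_cong) (rule shifted)
  have shifted_summable: "\<Phi> summable_on insert_dom n a d"
    using assms(4) unfolding chain_sum_eq_infsum_insert_dom(2)[OF len(2) an] insert_dom_shift[of d n a, symmetric]
      summable_on_reindex[OF inj] by (rule summable_on_cong[THEN iffD1, rotated]) (rule shifted)
  have sum: "chain_sum (fs @ g # gs) = infsum \<Phi> (insert_dom n a 0)"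
    unfolding \<Phi>_def by (rule chain_sum_eq_infsum_insert_dom(1)[OF len(1) an])
  have summable: "\<Phi> summable_on insert_dom n a 0"
    using assms(3) unfolding \<Phi>_def chain_sum_eq_infsum_insert_dom(2)[OF len(1) an] .
  have "\<And>t. t < d \<Longrightarrow> (\<lambda>ks. \<Phi> (ks, lower_at a ks + t)) summable_on chains n"
    and "\<And>t. 0 < a \<Longrightarrow> t \<in> {1..d} \<Longrightarrow> (\<lambda>ks. \<Phi> (ks, ks ! (a - 1) + t)) summable_on chains n"
    using assms(5,6) by (simp_all add: \<Phi>_def a_def)
  from infsum_insert_dom_shift[OF an summable shifted_summable this]
  show ?thesis
    unfolding shifted_sum sum by (simp add: \<Phi>_def a_def)
qed

text \<open>The two kinds of boundary terms are again sums of products over shorter chains: the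
  translated function merges with the neighbouring slot.\<close>
lemma prod_slots_lower_boundary_Nil:
  "length ks = length fs \<Longrightarrow>
   prod_slots (fs @ [g]) (insert_at (length fs) ks (lower_at (length fs) ks + t)) = g (1 + t) * prod_slots fs ks"
  by (simp add: lower_at_def insert_at_def prod_slots_append)

lemma prod_slots_lower_boundary_Cons:
  assumes "ks \<in> chains (length fs + Suc (length gs))"
  shows "prod_slots (fs @ g # f # gs) (insert_at (length fs) ks (lower_at (length fs) ks + t))
       = prod_slots (fs @ (\<lambda>m. g (m + t) * f m) # gs) ks"
  using assms by (simp add: chains_length lower_at_def insert_at_def prod_slots_append
      prod_slots_middle[where fs=fs] Cons_nth_drop_Suc[symmetric])

lemma prod_slots_upper_boundary:
  assumes "ks \<in> chains (length fs + length gs)" "fs \<noteq> []"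
  shows "prod_slots (fs @ g # gs) (insert_at (length fs) ks (ks ! (length fs - 1) + t))
       = prod_slots (butlast fs @ (\<lambda>m. last fs m * g (m + t)) # gs) ks"
proof -
  obtain fs' f where fs: "fs = fs' @ [f]"
    using assms(2) by (cases fs rule: rev_exhaust) auto
  have "length ks = Suc (length fs' + length gs)"
    using assms(1) fs by (simp add: chains_length)
  then show ?thesis
    by (simp add: fs insert_at_def prod_slots_append prod_slots_middle[where fs=fs']
        take_Suc_conv_app_nth Cons_nth_drop_Suc[symmetric] mult_ac)
qed

section \<open>Finite sums of shifted powers\<close>

text \<open>A triple \<open>(c, d, s)\<close> stands for the function \<open>k \<mapsto> c (k + d)\<^sup>-\<^sup>s\<close> on positive integers;
  a list of triples stands for their sum.\<close>
type_synonym ratfun = "(rat \<times> nat \<times> int) list"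

definition ratfun_eval :: "ratfun \<Rightarrow> nat \<Rightarrow> complex" where
  "ratfun_eval R k = (\<Sum>(c, d, s)\<leftarrow>R. of_rat c * of_nat (k + d) powi (- s))"

definition ratfun_weight :: "ratfun \<Rightarrow> nat" where
  "ratfun_weight R = foldr (\<lambda>(c, d, s) w. max (nat s) w) R 0"

definition ratfun_scale :: "rat \<Rightarrow> ratfun \<Rightarrow> ratfun" where
  "ratfun_scale r R = map (\<lambda>(c, d, s). (r * c, d, s)) R"

lemma ratfun_eval_Nil [simp]: "ratfun_eval [] k = 0"
  by (simp add: ratfun_eval_def)

lemma ratfun_eval_Cons [simp]:
  "ratfun_eval ((c, d, s) # R) k = of_rat c * of_nat (k + d) powi (- s) + ratfun_eval R k"
  by (simp add: ratfun_eval_def)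

lemma ratfun_eval_append [simp]: "ratfun_eval (R @ R') k = ratfun_eval R k + ratfun_eval R' k"
  by (simp add: ratfun_eval_def)

lemma ratfun_eval_scale [simp]: "ratfun_eval (ratfun_scale r R) k = of_rat r * ratfun_eval R k"
  by (induction R) (auto simp: ratfun_scale_def of_rat_mult algebra_simps)

lemma ratfun_weight_ge: "(c, d, s) \<in> set R \<Longrightarrow> s \<le> int (ratfun_weight R)"
  by (induction R) (auto simp: ratfun_weight_def)

lemma ratfun_weight_le:
  assumes "\<And>c d s. (c, d, s) \<in> set R \<Longrightarrow> s \<le> int w"
  shows "ratfun_weight R \<le> w"
proof -
  have "\<forall>(c, d, s)\<in>set R. s \<le> int w"
    using assms by blast
  then show ?thesis
    by (induction R) (auto simp: ratfun_weight_def)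
qed

lemma ratfun_weight_single [simp]: "ratfun_weight [(c, d, s)] = nat s"
  by (simp add: ratfun_weight_def)

lemma ratfun_weight_Cons_ge: "ratfun_weight R \<le> ratfun_weight (x # R)" "ratfun_weight [x] \<le> ratfun_weight (x # R)"
  by (auto simp: ratfun_weight_def split: prod.splits)

lemma of_nat_add_ne_0: "1 \<le> k \<Longrightarrow> (of_nat (k + d) :: complex) \<noteq> 0"
  by (metis add_is_0 not_one_le_zero of_nat_eq_0_iff)

lemma binomial_times_power_int:
  fixes x \<delta> :: complex
  assumes "x \<noteq> 0"
  shows "(x + \<delta>) ^ m * x powi (- s) = (\<Sum>r<Suc m. of_nat (m choose r) * \<delta> ^ (m - r) * x powi (- (s - int r)))"
proof -
  have "(x + \<delta>) ^ m * x powi (- s) = (\<Sum>r<Suc m. of_nat (m choose r) * x ^ r * \<delta> ^ (m - r)) * x powi (- s)"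
    by (simp add: binomial_ring lessThan_Suc_atMost)
  also have "\<dots> = (\<Sum>r<Suc m. of_nat (m choose r) * \<delta> ^ (m - r) * (x ^ r * x powi (- s)))"
    unfolding sum_distrib_right by (rule sum.cong) (simp_all add: mult_ac)
  also have "\<dots> = (\<Sum>r<Suc m. of_nat (m choose r) * \<delta> ^ (m - r) * x powi (- (s - int r)))"
  proof (rule sum.cong[OF refl])
    fix r
    have "x ^ r * x powi (- s) = x powi (int r) * x powi (- s)"
      by (simp add: power_int_of_nat)
    also have "\<dots> = x powi (int r + - s)"
      by (rule power_int_add[symmetric]) (use assms in simp)
    finally have "x ^ r * x powi (- s) = x powi (int r + - s)" .
    then show "of_nat (m choose r) * \<delta> ^ (m - r) * (x ^ r * x powi (- s))
                 = of_nat (m choose r) * \<delta> ^ (m - r) * x powi (- (s - int r))"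
      by simp
  qed
  finally show ?thesis .
qed

text \<open>If the first exponent is \<open>\<le> 0\<close>, expand \<open>(k + d)\<^sup>m = ((k + d') + (d - d'))\<^sup>m\<close>.\<close>
lemma shifted_powers_mult_nonpos:
  assumes "s \<le> 0"
  shows "\<exists>R. (\<forall>k\<ge>1. of_nat (k + d) powi (- s) * of_nat (k + d') powi (- s') = ratfun_eval R k)
           \<and> (\<forall>(c, e, t)\<in>set R. e = d' \<and> t \<le> s')"
proof -
  define m where "m = nat (- s)"
  define \<delta> :: rat where "\<delta> = of_int (int d - int d')"
  define R where "R = map (\<lambda>r. (of_nat (m choose r) * \<delta> ^ (m - r), d', s' - int r)) [0..<Suc m]"
  have "of_nat (k + d) powi (- s) * of_nat (k + d') powi (- s') = ratfun_eval R k" if "1 \<le> k" for k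
  proof -
    have shift: "(of_nat (k + d) :: complex) = of_nat (k + d') + of_rat \<delta>"
      by (simp add: \<delta>_def of_rat_diff)
    have power: "(of_nat (k + d) :: complex) powi (- s) = of_nat (k + d) ^ m"
      using assms by (simp add: m_def power_int_def)
    have "ratfun_eval R k = (\<Sum>r<Suc m. of_nat (m choose r) * of_rat \<delta> ^ (m - r)
                                             * (of_nat (k + d') :: complex) powi (- (s' - int r)))"
      by (simp add: ratfun_eval_def R_def interv_sum_list_conv_sum_set_nat atLeast0LessThan
          of_rat_mult of_rat_power comp_def)
    then show ?thesis
      unfolding power unfolding shift binomial_times_power_int[OF of_nat_add_ne_0[OF that]] ..
  qed
  moreover have "\<forall>(c, e, t)\<in>set R. e = d' \<and> t \<le> s'"
    by (auto simp: R_def)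
  ultimately show ?thesis
    by blast
qed

lemma partial_fractions_step:
  fixes x y :: complex
  assumes "x \<noteq> 0" "y \<noteq> 0" "y = x + \<delta>" "\<delta> \<noteq> 0"
  shows "inverse (x ^ Suc a) * inverse (y ^ Suc b)
           = (1 / \<delta>) * (inverse (x ^ Suc a) * inverse (y ^ b)) - (1 / \<delta>) * (inverse (x ^ a) * inverse (y ^ Suc b))"
proof -
  define P where "P = inverse (x ^ Suc a) * inverse (y ^ Suc b)"
  have 1: "inverse (x ^ Suc a) * inverse (y ^ b) = P * y"
    unfolding P_def using assms(2) by (simp add: field_simps)
  have 2: "inverse (x ^ a) * inverse (y ^ Suc b) = P * x"
    unfolding P_def using assms(1) by (simp add: field_simps)
  show ?thesis
    unfolding 1 2 P_def[symmetric] using assms(3,4) by (simp add: field_simps)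
qed

lemma ratfun_eval_partial_fractions_step:
  fixes d d' :: nat
  defines "\<delta> \<equiv> of_int (int d' - int d) :: rat"
  assumes "d \<noteq> d'" "1 \<le> k"
    and "ratfun_eval R1 k = inverse (of_nat (k + d) ^ Suc a) * inverse (of_nat (k + d') ^ b)"
    and "ratfun_eval R2 k = inverse (of_nat (k + d) ^ a) * inverse (of_nat (k + d') ^ Suc b)"
  shows "ratfun_eval (ratfun_scale (1 / \<delta>) R1 @ ratfun_scale (- (1 / \<delta>)) R2) k
           = inverse (of_nat (k + d) ^ Suc a) * inverse (of_nat (k + d') ^ Suc b)"
proof -
  have shift: "(of_nat (k + d') :: complex) = of_nat (k + d) + of_rat \<delta>"
    by (simp add: \<delta>_def of_rat_diff)
  have "(of_rat \<delta> :: complex) \<noteq> 0"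
    using assms(2) by (simp add: \<delta>_def)
  from partial_fractions_step[OF of_nat_add_ne_0[OF assms(3)] of_nat_add_ne_0[OF assms(3)] shift this, of a b]
  show ?thesis
    unfolding ratfun_eval_append ratfun_eval_scale assms(4,5) by (simp add: of_rat_divide of_rat_minus)
qed

lemma partial_fractions:
  assumes "d \<noteq> d'"
  shows "\<exists>R. (\<forall>k\<ge>1. inverse (of_nat (k + d) ^ a) * inverse (of_nat (k + d') ^ b) = ratfun_eval R k)
           \<and> (\<forall>(c, e, t)\<in>set R. e \<in> {d, d'} \<and> t \<le> int (max a b))"
proof (induction "a + b" arbitrary: a b rule: less_induct)
  case less
  show ?case
  proof (cases "a = 0 \<or> b = 0")
    case True
    then show ?thesis
    proof
      assume "a = 0"
      then show ?thesis
        by (intro exI[of _ "[(1, d', int b)]"]) (auto simp: power_int_minus)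
    next
      assume "b = 0"
      then show ?thesis
        by (intro exI[of _ "[(1, d, int a)]"]) (auto simp: power_int_minus)
    qed
  next
    case False
    then obtain a' b' where ab: "a = Suc a'" "b = Suc b'"
      by (meson not0_implies_Suc)
    obtain R1 where R1: "\<forall>k\<ge>1. inverse (of_nat (k + d) ^ a) * inverse (of_nat (k + d') ^ b') = ratfun_eval R1 k"
      "\<forall>(c, e, t)\<in>set R1. e \<in> {d, d'} \<and> t \<le> int (max a b')"
      using less[of a b'] ab by auto
    obtain R2 where R2: "\<forall>k\<ge>1. inverse (of_nat (k + d) ^ a') * inverse (of_nat (k + d') ^ b) = ratfun_eval R2 k"
      "\<forall>(c, e, t)\<in>set R2. e \<in> {d, d'} \<and> t \<le> int (max a' b)"
      using less[of a' b] ab by auto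
    define \<delta> :: rat where "\<delta> = of_int (int d' - int d)"
    define R where "R = ratfun_scale (1 / \<delta>) R1 @ ratfun_scale (- (1 / \<delta>)) R2"
    have "inverse (of_nat (k + d) ^ a) * inverse (of_nat (k + d') ^ b) = ratfun_eval R k" if "1 \<le> k" for k
      unfolding R_def \<delta>_def ab
      by (rule ratfun_eval_partial_fractions_step[OF assms that, symmetric]) (use R1(1) R2(1) that ab in auto)
    moreover have "\<forall>(c, e, t)\<in>set R. e \<in> {d, d'} \<and> t \<le> int (max a b)"
      using R1(2) R2(2) ab by (fastforce simp: R_def ratfun_scale_def)
    ultimately show ?thesis
      by blast
  qed
qed

lemma shifted_powers_mult_exists:
  "\<exists>R. (\<forall>k\<ge>1. of_nat (k + d) powi (- s) * of_nat (k + d') powi (- s') = ratfun_eval R k)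
     \<and> (\<forall>(c, e, t)\<in>set R. e \<in> {d, d'} \<and> t \<le> (if d = d' then s + s' else max s s'))"
proof (cases "d = d'")
  case True
  have "of_nat (k + d) powi (- s) * of_nat (k + d') powi (- s') = ratfun_eval [(1, d, s + s')] k"
    if "1 \<le> k" for k
    using True of_nat_add_ne_0[OF that, of d] by (simp add: power_int_add[symmetric])
  then show ?thesis
    using True by (intro exI[of _ "[(1, d, s + s')]"]) auto
next
  case False
  consider "s \<le> 0" | "s' \<le> 0" | "0 < s" "0 < s'"
    by linarith
  then show ?thesis
  proof cases
    case 1
    with shifted_powers_mult_nonpos[of s d d' s'] False show ?thesis
      by fastforce
  next
    case 2
    with shifted_powers_mult_nonpos[of s' d' d s] False show ?thesis
      by (fastforce simp: mult.commute)
  next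
    case 3
    have "x powi (- r) = inverse (x ^ nat r)" if "0 < r" for x :: complex and r
      using that by (simp add: power_int_def power_inverse)
    with partial_fractions[OF False, of "nat s" "nat s'"] 3 False show ?thesis
      by fastforce
  qed
qed

definition shifted_powers_mult :: "nat \<Rightarrow> int \<Rightarrow> nat \<Rightarrow> int \<Rightarrow> ratfun" where
  "shifted_powers_mult d s d' s' =
     (SOME R. (\<forall>k\<ge>1. of_nat (k + d) powi (- s) * of_nat (k + d') powi (- s') = ratfun_eval R k)
        \<and> (\<forall>(c, e, t)\<in>set R. e \<in> {d, d'} \<and> t \<le> (if d = d' then s + s' else max s s')))"

lemma shifted_powers_mult:
  "1 \<le> k \<Longrightarrow> ratfun_eval (shifted_powers_mult d s d' s') k = of_nat (k + d) powi (- s) * of_nat (k + d') powi (- s')"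
  "(c, e, t) \<in> set (shifted_powers_mult d s d' s') \<Longrightarrow> e \<in> {d, d'} \<and> t \<le> (if d = d' then s + s' else max s s')"
  using someI_ex[OF shifted_powers_mult_exists[of d s d' s'], folded shifted_powers_mult_def] by auto

fun ratfun_mult :: "ratfun \<Rightarrow> ratfun \<Rightarrow> ratfun" where
  "ratfun_mult [] R' = []"
| "ratfun_mult ((c, d, s) # R) R' =
     concat (map (\<lambda>(c', d', s'). ratfun_scale (c * c') (shifted_powers_mult d s d' s')) R') @ ratfun_mult R R'"

lemma ratfun_eval_mult: "1 \<le> k \<Longrightarrow> ratfun_eval (ratfun_mult R R') k = ratfun_eval R k * ratfun_eval R' k"
proof (induction R R' rule: ratfun_mult.induct)
  case (2 c d s R R')
  have "ratfun_eval (concat (map (\<lambda>(c', d', s'). ratfun_scale (c * c') (shifted_powers_mult d s d' s')) R')) k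
          = of_rat c * of_nat (k + d) powi (- s) * ratfun_eval R' k"
    by (induction R') (auto simp: shifted_powers_mult(1)[OF "2.prems"] of_rat_mult algebra_simps)
  then show ?case
    using 2 by (simp add: algebra_simps)
qed simp

lemma set_ratfun_mult:
  assumes "(b, e, t) \<in> set (ratfun_mult R R')"
  shows "\<exists>c d s c' d' s'. (c, d, s) \<in> set R \<and> (c', d', s') \<in> set R' \<and>
           e \<in> {d, d'} \<and> t \<le> (if d = d' then s + s' else max s s')"
  using assms
proof (induction R R' rule: ratfun_mult.induct)
  case (2 c d s R R')
  consider (head) "(b, e, t) \<in> set (concat (map (\<lambda>(c', d', s'). ratfun_scale (c * c') (shifted_powers_mult d s d' s')) R'))"
    | (tail) "(b, e, t) \<in> set (ratfun_mult R R')"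
    using "2.prems" by auto
  then show ?case
  proof cases
    case head
    then obtain c' d' s' b' where "(c', d', s') \<in> set R'" "(b', e, t) \<in> set (shifted_powers_mult d s d' s')"
      by (auto simp: ratfun_scale_def)
    then have "e \<in> {d, d'} \<and> t \<le> (if d = d' then s + s' else max s s')" "(c', d', s') \<in> set R'"
      using shifted_powers_mult(2) by blast+
    then show ?thesis
      by (meson list.set_intros(1))
  next
    case tail
    then show ?thesis
      using "2.IH" by (meson list.set_intros(2))
  qed
qed simp

lemma ratfun_weight_mult: "ratfun_weight (ratfun_mult R R') \<le> ratfun_weight R + ratfun_weight R'"
proof (rule ratfun_weight_le)
  fix c e t
  assume "(c, e, t) \<in> set (ratfun_mult R R')"
  then obtain c1 d s c2 d' s' where "(c1, d, s) \<in> set R" "(c2, d', s') \<in> set R'"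
    "t \<le> (if d = d' then s + s' else max s s')"
    using set_ratfun_mult by fast
  then show "t \<le> int (ratfun_weight R + ratfun_weight R')"
    using ratfun_weight_ge[of c1 d s R] ratfun_weight_ge[of c2 d' s' R'] by (auto split: if_splits)
qed

lemma norm_shifted_power_le:
  assumes "1 \<le> k"
  shows "norm ((of_nat (k + d) :: complex) powi (- s)) \<le> ((1 + real d) * real k) ^ nat (- s)"
proof -
  have norm: "norm ((of_nat (k + d) :: complex) powi (- s)) = real (k + d) powi (- s)"
    by (simp only: norm_power_int norm_of_nat)
  show ?thesis
  proof (cases "0 \<le> s")
    case True
    have "real (k + d) powi (- s) = inverse (real (k + d) ^ nat s)"
      using True by (simp add: power_int_def power_inverse)
    also have "\<dots> \<le> 1"
      using assms by (simp add: inverse_le_1_iff one_le_power)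
    also have "1 \<le> ((1 + real d) * real k) ^ nat (- s)"
      using assms mult_mono[of 1 "1 + real d" 1 "real k"] by (intro one_le_power) simp
    finally show ?thesis
      unfolding norm .
  next
    case False
    have "real (k + d) \<le> (1 + real d) * real k"
      using assms mult_left_mono[of 1 "real k" "real d"] by (simp add: algebra_simps)
    then show ?thesis
      unfolding norm using False by (simp add: power_int_def power_mono)
  qed
qed

lemma ratfun_eval_poly_bound: "\<exists>M N. 0 \<le> M \<and> (\<forall>k\<ge>1. norm (ratfun_eval R k) \<le> M * real k ^ N)"
proof (induction R)
  case Nil
  then show ?case
    by (intro exI[of _ 0]) auto
next
  case (Cons x R)
  obtain c d s where x: "x = (c, d, s)"
    by (cases x)
  obtain M N where M: "0 \<le> M" and bound: "\<forall>k\<ge>1. norm (ratfun_eval R k) \<le> M * real k ^ N"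
    using Cons by blast
  define N' where "N' = max (nat (- s)) N"
  define M' where "M' = norm (of_rat c :: complex) * (1 + real d) ^ nat (- s) + M"
  have "norm (ratfun_eval (x # R) k) \<le> M' * real k ^ N'" if "1 \<le> k" for k
  proof -
    have "norm (ratfun_eval (x # R) k)
            \<le> norm (of_rat c :: complex) * ((1 + real d) * real k) ^ nat (- s) + M * real k ^ N"
      using norm_triangle_ineq[of "of_rat c * of_nat (k + d) powi (- s)" "ratfun_eval R k"]
        norm_shifted_power_le[OF that, of d s] bound that
      by (fastforce simp: x norm_mult intro: order.trans add_mono mult_left_mono)
    also have "\<dots> \<le> norm (of_rat c :: complex) * ((1 + real d) ^ nat (- s) * real k ^ N') + M * real k ^ N'"
      unfolding power_mult_distrib using that M
      by (intro add_mono mult_left_mono power_increasing) (auto simp: N'_def)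
    finally show ?thesis
      by (simp add: M'_def algebra_simps)
  qed
  moreover have "0 \<le> M'"
    using M by (simp add: M'_def)
  ultimately show ?case
    by blast
qed

primrec pochhammer_ratfun :: "nat \<Rightarrow> nat \<Rightarrow> ratfun" where
  "pochhammer_ratfun A 0 = [(1, 0, int A)]"
| "pochhammer_ratfun A (Suc n) = ratfun_mult (pochhammer_ratfun A n) [(1, Suc n, int A)]"

lemma ratfun_eval_pochhammer_ratfun:
  "1 \<le> k \<Longrightarrow> ratfun_eval (pochhammer_ratfun A n) k = 1 / pochhammer (of_nat k) (Suc n) ^ A"
  by (induction n) (simp_all add: ratfun_eval_mult pochhammer_Suc power_int_minus power_int_of_nat
      power_mult_distrib divide_inverse add_ac)

text \<open>The factors \<open>(k + i)\<^sup>-\<^sup>A\<close> of \<open>(k)\<^sub>n\<^sub>+\<^sub>1\<^sup>-\<^sup>A\<close> have distinct shifts, so their product has weight \<open>A\<close>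
  rather than \<open>(n + 1) A\<close>.\<close>
lemma set_pochhammer_ratfun: "(c, d, s) \<in> set (pochhammer_ratfun A n) \<Longrightarrow> d \<le> n \<and> s \<le> int A"
proof (induction n arbitrary: c d s)
  case (Suc n)
  then obtain c1 d1 s1 where "(c1, d1, s1) \<in> set (pochhammer_ratfun A n)"
    "d \<in> {d1, Suc n}" "s \<le> (if d1 = Suc n then s1 + int A else max s1 (int A))"
    using set_ratfun_mult[OF Suc.prems[simplified]] by auto
  then show ?case
    using Suc.IH by fastforce
qed simp

definition series_ratfun :: "nat \<Rightarrow> nat \<Rightarrow> nat \<Rightarrow> ratfun" where
  "series_ratfun e n A = ratfun_mult [(1, 0, - int e)] (pochhammer_ratfun A n)"

lemma ratfun_eval_series_ratfun:
  "1 \<le> k \<Longrightarrow> ratfun_eval (series_ratfun e n A) k = of_nat k ^ e / pochhammer (of_nat k) (Suc n) ^ A"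
  unfolding series_ratfun_def by (simp only: ratfun_eval_mult) (simp add: ratfun_eval_pochhammer_ratfun power_int_of_nat)

lemma ratfun_weight_series_ratfun: "ratfun_weight (series_ratfun e n A) \<le> A"
proof (rule ratfun_weight_le)
  fix c d s
  assume "(c, d, s) \<in> set (series_ratfun e n A)"
  from set_ratfun_mult[OF this[unfolded series_ratfun_def]]
  obtain c1 d1 s1 where "(c1, d1, s1) \<in> set (pochhammer_ratfun A n)"
    "s \<le> (if 0 = d1 then - int e + s1 else max (- int e) s1)"
    by auto
  then show "s \<le> int A"
    using set_pochhammer_ratfun by (fastforce split: if_splits)
qed

section \<open>Summability\<close>

lemma summable_poly_times_geometric:
  fixes r :: real
  assumes "\<bar>r\<bar> < 1"
  shows "summable (\<lambda>n. real n ^ N * r ^ n)"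
proof -
  have "conv_radius (\<lambda>n. real n ^ N) = 1"
    by (rule conv_radius_ratio_limit_nonzero[of _ 1]) (simp_all, real_asymp)
  then show ?thesis
    using assms by (intro summable_in_conv_radius) simp
qed

lemma card_chains_hd_eq_le:
  assumes "F \<subseteq> chains n"
  shows "card {ks \<in> F. hd ks = K} \<le> K ^ n"
proof -
  have "{ks \<in> F. hd ks = K} \<subseteq> {ks. set ks \<subseteq> {1..K} \<and> length ks = n}"
    using assms chains_hd_bound by (fastforce simp: chains_length)
  then have "card {ks \<in> F. hd ks = K} \<le> card {ks. set ks \<subseteq> {1..K} \<and> length ks = n}"
    by (intro card_mono) (auto intro: finite_lists_length_eq)
  then show ?thesis
    by (simp add: card_lists_length_eq)
qed

text \<open>A chain is determined up to \<open>K\<^sup>n\<close> choices by its head \<open>K\<close>, so a geometric decay in the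
  head suffices for summability.\<close>
lemma summable_on_chains_hd:
  fixes r :: real
  assumes "0 \<le> r" "r < 1" "0 \<le> C"
  shows "(\<lambda>ks. C * real (hd ks) ^ N * r ^ hd ks) summable_on chains n"
proof (rule nonneg_bdd_above_summable_on)
  show "\<And>ks. ks \<in> chains n \<Longrightarrow> 0 \<le> C * real (hd ks) ^ N * r ^ hd ks"
    using assms by simp
  have summable: "summable (\<lambda>K. C * (real K ^ (n + N) * r ^ K))"
    using summable_poly_times_geometric[of r "n + N"] assms by (intro summable_mult) simp
  show "bdd_above (sum (\<lambda>ks. C * real (hd ks) ^ N * r ^ hd ks) ` {F. F \<subseteq> chains n \<and> finite F})"
  proof (rule bdd_aboveI2)
    fix F assume "F \<in> {F. F \<subseteq> chains n \<and> finite F}"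
    then have F: "F \<subseteq> chains n" "finite F"
      by auto
    define \<phi> where "\<phi> K = C * real K ^ N * r ^ K" for K
    have "(\<Sum>ks\<in>F. C * real (hd ks) ^ N * r ^ hd ks) = (\<Sum>K\<in>hd ` F. \<Sum>ks\<in>{ks \<in> F. hd ks = K}. \<phi> (hd ks))"
      unfolding \<phi>_def by (rule sum.image_gen[OF F(2)])
    also have "\<dots> = (\<Sum>K\<in>hd ` F. real (card {ks \<in> F. hd ks = K}) * (C * real K ^ N * r ^ K))"
      by (rule sum.cong[OF refl]) (simp add: \<phi>_def)
    also have "\<dots> \<le> (\<Sum>K\<in>hd ` F. C * (real K ^ (n + N) * r ^ K))"
    proof (rule sum_mono)
      fix K
      have "real (card {ks \<in> F. hd ks = K}) \<le> real K ^ n"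
        using card_chains_hd_eq_le[OF F(1), of K] by (metis of_nat_le_iff of_nat_power)
      then have "real (card {ks \<in> F. hd ks = K}) * (C * real K ^ N * r ^ K) \<le> real K ^ n * (C * real K ^ N * r ^ K)"
        using assms by (intro mult_right_mono) auto
      then show "real (card {ks \<in> F. hd ks = K}) * (C * real K ^ N * r ^ K) \<le> C * (real K ^ (n + N) * r ^ K)"
        by (simp add: power_add algebra_simps)
    qed
    also have "\<dots> \<le> (\<Sum>K. C * (real K ^ (n + N) * r ^ K))"
      by (rule sum_le_suminf[OF summable]) (use F assms in auto)
    finally show "(\<Sum>ks\<in>F. C * real (hd ks) ^ N * r ^ hd ks) \<le> (\<Sum>K. C * (real K ^ (n + N) * r ^ K))" .
  qed
qed

section \<open>Products of factors over chains\<close>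

text \<open>A factor \<open>(J, R)\<close> stands for \<open>k \<mapsto> w\<^sub>J\<^sup>k R(k)\<close>, where \<open>w\<^sub>J = 1 / \<Prod>\<^sub>j\<^sub>\<in>\<^sub>J z\<^sub>j\<close>.\<close>
type_synonym factor = "nat set \<times> ratfun"

definition winv :: "(nat \<Rightarrow> complex) \<Rightarrow> nat set \<Rightarrow> complex" where
  "winv z J = 1 / (\<Prod>j\<in>J. z j)"

definition factor_eval :: "(nat \<Rightarrow> complex) \<Rightarrow> factor \<Rightarrow> nat \<Rightarrow> complex" where
  "factor_eval z F k = winv z (fst F) ^ k * ratfun_eval (snd F) k"

definition factor_sum :: "(nat \<Rightarrow> complex) \<Rightarrow> factor list \<Rightarrow> complex" where
  "factor_sum z Fs = chain_sum (map (factor_eval z) Fs)"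

definition in_domain :: "nat \<Rightarrow> (nat \<Rightarrow> complex) \<Rightarrow> bool" where
  "in_domain p z \<longleftrightarrow> 1 < norm (z 0) \<and> (\<forall>j<p. 1 \<le> norm (z j))"

text \<open>The index sets are nonempty subsets of \<open>{..<p}\<close>, and the first one contains \<open>0\<close>: this gives
  the first factor geometric decay, which dominates the polynomial growth of all factors.\<close>
definition admissible :: "nat \<Rightarrow> factor list \<Rightarrow> bool" where
  "admissible p Fs \<longleftrightarrow> (\<forall>F\<in>set Fs. fst F \<noteq> {} \<and> fst F \<subseteq> {..<p}) \<and> (Fs \<noteq> [] \<longrightarrow> 0 \<in> fst (hd Fs))"

lemma in_domain_nonzero: "in_domain p z \<Longrightarrow> j < p \<Longrightarrow> z j \<noteq> 0"
  by (auto simp: in_domain_def)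

lemma norm_prod_ge1: "in_domain p z \<Longrightarrow> J \<subseteq> {..<p} \<Longrightarrow> 1 \<le> norm (\<Prod>j\<in>J. z j)"
  unfolding prod_norm[symmetric] in_domain_def by (intro prod_ge_1) auto

lemma winv_nonzero: "in_domain p z \<Longrightarrow> J \<subseteq> {..<p} \<Longrightarrow> winv z J \<noteq> 0"
  using norm_prod_ge1[of p z J] by (auto simp: winv_def)

lemma norm_winv_le: "in_domain p z \<Longrightarrow> J \<subseteq> {..<p} \<Longrightarrow> norm (winv z J) \<le> 1"
  using norm_prod_ge1[of p z J] by (simp add: winv_def norm_divide divide_le_eq)

lemma norm_winv_less:
  assumes "in_domain p z" "J \<subseteq> {..<p}" "0 \<in> J"
  shows "norm (winv z J) < 1"
proof -
  have "finite J"
    using assms(2) finite_subset by blast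
  then have "norm (\<Prod>j\<in>J. z j) = norm (z 0) * norm (\<Prod>j\<in>J - {0}. z j)"
    using prod.remove[of J 0 z] assms(3) by (simp add: norm_mult)
  moreover have "1 \<le> norm (\<Prod>j\<in>J - {0}. z j)"
    using norm_prod_ge1[OF assms(1), of "J - {0}"] assms(2) by auto
  moreover have "1 < norm (z 0)"
    using assms(1) by (simp add: in_domain_def)
  moreover have "norm (z 0) \<le> norm (z 0) * norm (\<Prod>j\<in>J - {0}. z j)"
    using calculation mult_left_mono[of 1 "norm (\<Prod>j\<in>J - {0}. z j)" "norm (z 0)"] by simp
  ultimately have "1 < norm (\<Prod>j\<in>J. z j)"
    by linarith
  then show ?thesis
    by (simp add: winv_def norm_divide divide_less_eq)
qed

lemma winv_union: "finite J \<Longrightarrow> finite J' \<Longrightarrow> J \<inter> J' = {} \<Longrightarrow> winv z (J \<union> J') = winv z J * winv z J'"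
  by (simp add: winv_def prod.union_disjoint)

lemma prod_power_int_distrib:
  fixes f :: "'a \<Rightarrow> 'b::field"
  shows "finite J \<Longrightarrow> (\<Prod>j\<in>J. f j) powi m = (\<Prod>j\<in>J. f j powi m)"
  by (induction J rule: finite_induct) (auto simp: power_int_mult_distrib)

lemma winv_power_int:
  assumes "J \<subseteq> {..<p}" "\<forall>j<p. z j \<noteq> 0"
  shows "winv z J powi m = (\<Prod>j<p. z j powi (if j \<in> J then - m else 0))"
proof -
  have "finite J"
    using assms(1) finite_subset by blast
  have "winv z J powi m = (\<Prod>j\<in>J. z j) powi (- m)"
    by (simp add: winv_def power_int_minus divide_inverse power_int_inverse)
  also have "\<dots> = (\<Prod>j\<in>J. z j powi (- m))"
    by (rule prod_power_int_distrib) fact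
  also have "\<dots> = (\<Prod>j<p. if j \<in> J then z j powi (- m) else 1)"
    using assms(1) by (simp add: prod.If_cases Int_absorb1)
  also have "\<dots> = (\<Prod>j<p. z j powi (if j \<in> J then - m else 0))"
    by (rule prod.cong) auto
  finally show ?thesis .
qed

lemma norm_factor_eval_bound:
  "\<exists>M N. 0 \<le> M \<and> (\<forall>k\<ge>1. norm (factor_eval z F k) \<le> norm (winv z (fst F)) ^ k * (M * real k ^ N))"
proof -
  obtain M N where "0 \<le> M" "\<forall>k\<ge>1. norm (ratfun_eval (snd F) k) \<le> M * real k ^ N"
    using ratfun_eval_poly_bound by blast
  then show ?thesis
    by (intro exI[of _ M] exI[of _ N]) (auto simp: factor_eval_def norm_mult norm_power intro!: mult_left_mono)
qed

lemma norm_prod_slots_factors_bound: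
  assumes "in_domain p z" "\<forall>F\<in>set Fs. fst F \<subseteq> {..<p}"
  shows "\<exists>C N. 0 \<le> C \<and> (\<forall>K ks. length ks = length Fs \<longrightarrow> (\<forall>k\<in>set ks. 1 \<le> k \<and> k \<le> K) \<longrightarrow>
           norm (prod_slots (map (factor_eval z) Fs) ks) \<le> C * real K ^ N)"
  using assms(2)
proof (induction Fs)
  case Nil
  then show ?case
    by (intro exI[of _ 1] exI[of _ 0]) auto
next
  case (Cons F Fs)
  obtain C N where C: "0 \<le> C" and bound: "\<forall>K ks. length ks = length Fs \<longrightarrow> (\<forall>k\<in>set ks. 1 \<le> k \<and> k \<le> K) \<longrightarrow>
      norm (prod_slots (map (factor_eval z) Fs) ks) \<le> C * real K ^ N"
    using Cons by auto
  obtain M N1 where M: "0 \<le> M"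
    and bound1: "\<forall>k\<ge>1. norm (factor_eval z F k) \<le> norm (winv z (fst F)) ^ k * (M * real k ^ N1)"
    using norm_factor_eval_bound by blast
  have w: "norm (winv z (fst F)) \<le> 1"
    using norm_winv_le[OF assms(1)] Cons.prems by auto
  have "norm (prod_slots (map (factor_eval z) (F # Fs)) ks) \<le> M * C * real K ^ (N1 + N)"
    if len: "length ks = length (F # Fs)" and ks: "\<forall>k\<in>set ks. 1 \<le> k \<and> k \<le> K" for K ks
  proof -
    obtain k ks' where ks_eq: "ks = k # ks'"
      using len by (cases ks) auto
    have k: "1 \<le> k" "k \<le> K"
      using ks ks_eq by auto
    have "norm (factor_eval z F k) \<le> norm (winv z (fst F)) ^ k * (M * real k ^ N1)"
      using bound1 k by auto
    also have "\<dots> \<le> 1 * (M * real K ^ N1)"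
      using w k M by (intro mult_mono power_le_one mult_left_mono power_mono) auto
    finally have "norm (factor_eval z F k) \<le> M * real K ^ N1"
      by simp
    moreover have "norm (prod_slots (map (factor_eval z) Fs) ks') \<le> C * real K ^ N"
      using bound len ks ks_eq by auto
    ultimately have "norm (prod_slots (map (factor_eval z) (F # Fs)) ks) \<le> (M * real K ^ N1) * (C * real K ^ N)"
      using M by (auto simp: ks_eq norm_mult intro: mult_mono)
    then show ?thesis
      by (simp add: power_add algebra_simps)
  qed
  then show ?case
    using M C by (intro exI[of _ "M * C"] exI[of _ "N1 + N"]) auto
qed

lemma summable_on_factors:
  assumes z: "in_domain p z" and Fs: "admissible p Fs"
  shows "prod_slots (map (factor_eval z) Fs) summable_on chains (length Fs)"
proof (cases Fs)
  case Nil
  then show ?thesis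
    by (simp add: chains_0)
next
  case (Cons F Fs')
  have F: "fst F \<subseteq> {..<p}" "0 \<in> fst F" and Fs': "\<forall>F\<in>set Fs'. fst F \<subseteq> {..<p}"
    using Fs Cons by (auto simp: admissible_def)
  obtain C N where C: "0 \<le> C" and bound: "\<forall>K ks. length ks = length Fs' \<longrightarrow> (\<forall>k\<in>set ks. 1 \<le> k \<and> k \<le> K) \<longrightarrow>
      norm (prod_slots (map (factor_eval z) Fs') ks) \<le> C * real K ^ N"
    using norm_prod_slots_factors_bound[OF z Fs'] by blast
  obtain M N1 where M: "0 \<le> M"
    and bound1: "\<forall>k\<ge>1. norm (factor_eval z F k) \<le> norm (winv z (fst F)) ^ k * (M * real k ^ N1)"
    using norm_factor_eval_bound by blast
  define r where "r = norm (winv z (fst F))"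
  have r: "0 \<le> r" "r < 1"
    using norm_winv_less[OF z F] by (auto simp: r_def)
  have bound_hd: "norm (prod_slots (map (factor_eval z) Fs) ks) \<le> (M * C) * real (hd ks) ^ (N1 + N) * r ^ hd ks"
    if ks: "ks \<in> chains (length Fs)" for ks
  proof -
    obtain k ks' where ks_eq: "ks = k # ks'"
      using ks Cons by (cases ks) (auto dest: chains_length)
    have "1 \<le> k" and ks': "\<forall>x\<in>set ks'. 1 \<le> x \<and> x \<le> k"
      using chains_hd_bound[OF ks] ks_eq by auto
    moreover have "length ks' = length Fs'"
      using chains_length[OF ks] ks_eq Cons by simp
    ultimately have "norm (factor_eval z F k) * norm (prod_slots (map (factor_eval z) Fs') ks')
                       \<le> (r ^ k * (M * real k ^ N1)) * (C * real k ^ N)"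
      using bound1 bound M by (intro mult_mono) (auto simp: r_def)
    then show ?thesis
      by (simp add: Cons ks_eq norm_mult power_add algebra_simps)
  qed
  have "(\<lambda>ks. (M * C) * real (hd ks) ^ (N1 + N) * r ^ hd ks) summable_on chains (length Fs)"
    using r M C by (intro summable_on_chains_hd) auto
  then have "(\<lambda>ks. norm (prod_slots (map (factor_eval z) Fs) ks)) summable_on chains (length Fs)"
    by (rule Infinite_Sum.abs_summable_on_comparison_test'[OF _ bound_hd])
  then show ?thesis
    using summable_on_iff_abs_summable_on_complex by blast
qed

section \<open>Linear combinations of multiple polylogarithms\<close>

type_synonym la_term = "((nat \<Rightarrow> int) \<times> rat) list \<times> int list \<times> nat set list"

definition la_term_ok :: "nat \<Rightarrow> nat \<Rightarrow> la_term \<Rightarrow> bool" where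
  "la_term_ok p W = (\<lambda>(L, s, I). length s \<le> p \<and> length I = length s \<and>
     (\<forall>i<length s. I ! i \<noteq> {} \<and> I ! i \<subseteq> {..<p}) \<and> (\<Sum>i<length s. max (s ! i) 0) \<le> int W)"

definition la_comb :: "nat \<Rightarrow> (nat \<Rightarrow> complex) \<Rightarrow> la_term list \<Rightarrow> complex" where
  "la_comb p z T = (\<Sum>(L, s, I)\<leftarrow>T. laurent_eval L p z * La s (map (\<lambda>J. 1 / (\<Prod>j\<in>J. z j)) I))"

definition La_span :: "nat \<Rightarrow> nat \<Rightarrow> ((nat \<Rightarrow> complex) \<Rightarrow> complex) \<Rightarrow> bool" where
  "La_span p W F \<longleftrightarrow> (\<exists>T. (\<forall>t\<in>set T. la_term_ok p W t) \<and> (\<forall>z. in_domain p z \<longrightarrow> F z = la_comb p z T))"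

lemma La_span_cong: "La_span p W F \<Longrightarrow> (\<And>z. in_domain p z \<Longrightarrow> F z = G z) \<Longrightarrow> La_span p W G"
  unfolding La_span_def by auto

lemma La_span_zero: "La_span p W (\<lambda>z. 0)"
  unfolding La_span_def by (intro exI[of _ "[]"]) (simp add: la_comb_def)

lemma La_span_add:
  assumes "La_span p W F" "La_span p W G"
  shows "La_span p W (\<lambda>z. F z + G z)"
proof -
  obtain T1 T2 where "\<forall>t\<in>set T1. la_term_ok p W t" "\<forall>z. in_domain p z \<longrightarrow> F z = la_comb p z T1"
    "\<forall>t\<in>set T2. la_term_ok p W t" "\<forall>z. in_domain p z \<longrightarrow> G z = la_comb p z T2"
    using assms unfolding La_span_def by blast
  then show ?thesis
    unfolding La_span_def by (intro exI[of _ "T1 @ T2"]) (auto simp: la_comb_def)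
qed

lemma La_span_sum:
  "finite A \<Longrightarrow> (\<And>a. a \<in> A \<Longrightarrow> La_span p W (F a)) \<Longrightarrow> La_span p W (\<lambda>z. \<Sum>a\<in>A. F a z)"
  by (induction A rule: finite_induct) (simp_all add: La_span_zero La_span_add)

lemma La_span_sum_list:
  "(\<And>x. x \<in> set xs \<Longrightarrow> La_span p W (F x)) \<Longrightarrow> La_span p W (\<lambda>z. \<Sum>x\<leftarrow>xs. F x z)"
  by (induction xs) (simp_all add: La_span_zero La_span_add)

lemma La_span_mult_coeffs:
  assumes "La_span p W F"
    and "\<And>z L. in_domain p z \<Longrightarrow> laurent_eval (h L) p z = c z * laurent_eval L p z"
  shows "La_span p W (\<lambda>z. c z * F z)"
proof -
  obtain T where T: "\<forall>t\<in>set T. la_term_ok p W t" "\<forall>z. in_domain p z \<longrightarrow> F z = la_comb p z T"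
    using assms(1) unfolding La_span_def by blast
  define T' where "T' = map (\<lambda>(L, s, I). (h L, s, I)) T"
  have "la_comb p z T' = c z * la_comb p z T" if "in_domain p z" for z
    unfolding T'_def la_comb_def
    by (induction T) (auto simp: assms(2)[OF that] distrib_left mult.assoc)
  moreover have "la_term_ok p W (h L, s, I) \<longleftrightarrow> la_term_ok p W (L, s, I)" for L s I
    by (simp add: la_term_ok_def)
  then have "\<forall>t\<in>set T'. la_term_ok p W t"
    using T(1) by (auto simp: T'_def)
  ultimately show ?thesis
    unfolding La_span_def using T(2) by (intro exI[of _ T']) auto
qed

lemma La_span_cmult: "La_span p W F \<Longrightarrow> La_span p W (\<lambda>z. of_rat c * F z)"
proof (rule La_span_mult_coeffs)
  fix L and z :: "nat \<Rightarrow> complex"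
  show "laurent_eval (map (\<lambda>(e, c'). (e, c * c')) L) p z = of_rat c * laurent_eval L p z"
    by (induction L) (auto simp: laurent_eval_def of_rat_mult distrib_left mult.assoc)
qed

lemma La_span_diff: "La_span p W F \<Longrightarrow> La_span p W G \<Longrightarrow> La_span p W (\<lambda>z. F z - G z)"
  using La_span_add[of p W F "\<lambda>z. - G z"] La_span_cmult[of p W G "- 1"] by simp

lemma La_span_monomial_mult: "La_span p W F \<Longrightarrow> La_span p W (\<lambda>z. (\<Prod>j<p. z j powi e j) * F z)"
proof (rule La_span_mult_coeffs)
  fix L and z :: "nat \<Rightarrow> complex"
  assume "in_domain p z"
  then have "(\<Prod>j<p. z j powi (e j + e' j)) = (\<Prod>j<p. z j powi e j) * (\<Prod>j<p. z j powi e' j)" for e'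
    unfolding prod.distrib[symmetric] by (intro prod.cong refl power_int_add) (auto dest: in_domain_nonzero)
  then show "laurent_eval (map (\<lambda>(e', c). (\<lambda>j. e j + e' j, c)) L) p z = (\<Prod>j<p. z j powi e j) * laurent_eval L p z"
    by (induction L) (auto simp: laurent_eval_def distrib_left mult_ac)
qed

lemma La_span_winv_mult:
  assumes "La_span p W F" "J \<subseteq> {..<p}"
  shows "La_span p W (\<lambda>z. winv z J powi m * F z)"
proof (rule La_span_cong[OF La_span_monomial_mult[OF assms(1), of "\<lambda>j. if j \<in> J then - m else 0"]])
  fix z assume "in_domain p z"
  then have "\<forall>j<p. z j \<noteq> 0"
    by (auto dest: in_domain_nonzero)
  then show "(\<Prod>j<p. z j powi (if j \<in> J then - m else 0)) * F z = winv z J powi m * F z"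
    using winv_power_int[OF assms(2)] by simp
qed

lemma La_span_La: "la_term_ok p W (L, s, I) \<Longrightarrow> La_span p W (\<lambda>z. La s (map (winv z) I))"
  unfolding La_span_def
  by (intro exI[of _ "[([(\<lambda>_. 0, 1)], s, I)]"])
     (auto simp: la_term_ok_def la_comb_def laurent_eval_def winv_def[abs_def])

section \<open>Reduction of sums of products of factors\<close>

lemma factor_eval_Nil: "factor_eval z (J, []) k = 0"
  by (simp add: factor_eval_def)

lemma factor_eval_Cons: "factor_eval z (J, x # R) k = factor_eval z (J, [x]) k + factor_eval z (J, R) k"
  by (cases x) (simp add: factor_eval_def algebra_simps)

lemma factor_eval_single: "factor_eval z (J, [(c, d, s)]) k = winv z J ^ k * (of_rat c * of_nat (k + d) powi (- s))"
  by (simp add: factor_eval_def)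

lemma factor_eval_shift:
  assumes "winv z J \<noteq> 0"
  shows "factor_eval z (J, [(c, d, s)]) k = winv z J powi (- int d) * factor_eval z (J, [(c, 0, s)]) (k + d)"
proof -
  have "winv z J powi (- int d) * winv z J ^ (k + d) = winv z J ^ k"
    using assms by (simp add: power_add power_int_minus field_simps)
  then show ?thesis
    by (simp add: factor_eval_single algebra_simps)
qed

lemma factor_eval_merge_next:
  assumes "1 \<le> m" "finite J" "finite J'" "J \<inter> J' = {}"
  shows "factor_eval z (J, [(c, 0, s)]) (m + t) * factor_eval z (J', R) m
           = winv z J powi int t * factor_eval z (J \<union> J', ratfun_mult [(c, t, s)] R) m"
  unfolding factor_eval_def fst_conv snd_conv ratfun_eval_mult[OF assms(1)] winv_union[OF assms(2-4)]
  by (simp add: power_add power_mult_distrib algebra_simps)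

lemma factor_eval_merge_prev:
  assumes "1 \<le> m" "finite J" "finite J'" "J \<inter> J' = {}"
  shows "factor_eval z (J', R) m * factor_eval z (J, [(c, 0, s)]) (m + t)
           = winv z J powi int t * factor_eval z (J' \<union> J, ratfun_mult R [(c, t, s)]) m"
proof -
  have disjoint: "J' \<inter> J = {}"
    using assms(4) by blast
  show ?thesis
    unfolding factor_eval_def fst_conv snd_conv ratfun_eval_mult[OF assms(1)] winv_union[OF assms(3,2) disjoint]
    by (simp add: power_add power_mult_distrib algebra_simps)
qed

lemma factor_sum_empty_factor: "factor_sum z (Xs @ (J, []) # Ys) = 0"
proof -
  have "prod_slots (map (factor_eval z) (Xs @ (J, []) # Ys)) ks = 0"
    if "ks \<in> chains (length (Xs @ (J, []) # Ys))" for ks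
    using chains_length[OF that] by (simp add: prod_slots_middle factor_eval_Nil)
  then show ?thesis
    unfolding factor_sum_def chain_sum_def length_map by (rule infsum_0)
qed

lemma factor_sum_split:
  assumes z: "in_domain p z" and "admissible p (Xs @ (J, x # R) # Ys)"
  shows "factor_sum z (Xs @ (J, x # R) # Ys) = factor_sum z (Xs @ (J, [x]) # Ys) + factor_sum z (Xs @ (J, R) # Ys)"
proof -
  define n where "n = Suc (length Xs + length Ys)"
  have len: "length (Xs @ (J, R') # Ys) = n" for R'
    by (simp add: n_def)
  have "admissible p (Xs @ (J, R') # Ys)" for R'
    using assms(2) by (cases Xs) (auto simp: admissible_def)
  from summable_on_factors[OF z this] have summable:
    "prod_slots (map (factor_eval z) (Xs @ (J, R') # Ys)) summable_on chains n" for R'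
    by (simp add: n_def)
  have "prod_slots (map (factor_eval z) (Xs @ (J, x # R) # Ys)) ks
          = prod_slots (map (factor_eval z) (Xs @ (J, [x]) # Ys)) ks + prod_slots (map (factor_eval z) (Xs @ (J, R) # Ys)) ks"
    if "ks \<in> chains n" for ks
    using chains_length[OF that] by (simp add: n_def prod_slots_middle factor_eval_Cons[of z J x R] algebra_simps)
  then have "factor_sum z (Xs @ (J, x # R) # Ys)
               = infsum (\<lambda>ks. prod_slots (map (factor_eval z) (Xs @ (J, [x]) # Ys)) ks
                             + prod_slots (map (factor_eval z) (Xs @ (J, R) # Ys)) ks) (chains n)"
    unfolding factor_sum_def chain_sum_def length_map len by (rule infsum_cong)
  also have "\<dots> = factor_sum z (Xs @ (J, [x]) # Ys) + factor_sum z (Xs @ (J, R) # Ys)"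
    unfolding factor_sum_def chain_sum_def length_map len by (rule infsum_add[OF summable summable])
  finally show ?thesis .
qed

lemma factor_sum_eq_La:
  assumes "\<forall>F\<in>set Fs. \<exists>c s. snd F = [(c, 0, s)]"
  shows "factor_sum z Fs = of_rat (\<Prod>F\<leftarrow>Fs. fst (hd (snd F)))
           * La (map (\<lambda>F. snd (snd (hd (snd F)))) Fs) (map (winv z \<circ> fst) Fs)"
proof -
  define ss where "ss = map (\<lambda>F. snd (snd (hd (snd F)))) Fs"
  define ws where "ws = map (winv z \<circ> fst) Fs"
  have "prod_slots (map (factor_eval z) Fs) ks = of_rat (\<Prod>F\<leftarrow>Fs. fst (hd (snd F))) *
          (\<Prod>i<length Fs. winv z (fst (Fs ! i)) ^ (ks ! i) / of_nat (ks ! i) powi snd (snd (hd (snd (Fs ! i)))))"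
    if "length ks = length Fs" for ks
    using assms that
  proof (induction Fs arbitrary: ks)
    case (Cons F Fs)
    obtain k ks' where ks: "ks = k # ks'"
      using Cons.prems by (cases ks) auto
    obtain c s where F: "snd F = [(c, 0, s)]"
      using Cons.prems by auto
    have "factor_eval z F k = of_rat c * (winv z (fst F) ^ k / of_nat k powi s)"
      using F by (simp add: factor_eval_def power_int_minus divide_inverse)
    then show ?case
      using Cons ks F by (simp add: prod.lessThan_Suc_shift of_rat_mult algebra_simps del: prod.lessThan_Suc)
  qed simp
  then have "prod_slots (map (factor_eval z) Fs) ks = of_rat (\<Prod>F\<leftarrow>Fs. fst (hd (snd F))) *
               (\<Prod>i<length ss. (ws ! i) ^ (ks ! i) / of_nat (ks ! i) powi (ss ! i))"
    if "ks \<in> chains (length Fs)" for ks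
    using chains_length[OF that] by (simp add: ss_def ws_def)
  then have "factor_sum z Fs = infsum (\<lambda>ks. of_rat (\<Prod>F\<leftarrow>Fs. fst (hd (snd F))) *
               (\<Prod>i<length ss. (ws ! i) ^ (ks ! i) / of_nat (ks ! i) powi (ss ! i))) (chains (length Fs))"
    unfolding factor_sum_def chain_sum_def length_map by (rule infsum_cong)
  moreover have "length ss = length Fs"
    by (simp add: ss_def)
  ultimately show ?thesis
    unfolding ss_def[symmetric] ws_def[symmetric] La_def by (simp add: infsum_cmult_right')
qed

lemma admissible_replace: "admissible p (Xs @ (J, R) # Ys) \<Longrightarrow> admissible p (Xs @ (J, R') # Ys)"
  by (cases Xs) (auto simp: admissible_def)

lemma admissible_prefix: "admissible p (Xs @ Ys) \<Longrightarrow> admissible p Xs"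
  by (cases Xs) (auto simp: admissible_def)

lemma admissible_merge_next: "admissible p (Xs @ (J, R) # Y # Ys) \<Longrightarrow> admissible p (Xs @ (J \<union> fst Y, R') # Ys)"
  by (cases Xs) (auto simp: admissible_def)

lemma admissible_merge_prev:
  assumes "Xs \<noteq> []" "admissible p (Xs @ (J, R) # Ys)"
  shows "admissible p (butlast Xs @ (fst (last Xs) \<union> J, R') # Ys)"
proof -
  obtain Xs' X where "Xs = Xs' @ [X]"
    using assms(1) by (cases Xs rule: rev_exhaust) auto
  then show ?thesis
    using assms(2) by (cases Xs') (auto simp: admissible_def)
qed

lemma prod_slots_factors_merge_next:
  assumes ks: "ks \<in> chains (length Xs + Suc (length Ys))"
    and "finite J" "finite (fst Y)" "J \<inter> fst Y = {}"
  shows "prod_slots (map (factor_eval z) (Xs @ (J, [(c, 0, s)]) # Y # Ys))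
           (insert_at (length Xs) ks (lower_at (length Xs) ks + t))
       = winv z J powi int t * prod_slots (map (factor_eval z) (Xs @ (J \<union> fst Y, ratfun_mult [(c, t, s)] (snd Y)) # Ys)) ks"
proof -
  have len: "length ks = length (map (factor_eval z) Xs) + Suc (length (map (factor_eval z) Ys))"
    using chains_length[OF ks] by simp
  have "1 \<le> ks ! length Xs"
    using chains_nth_ge1[OF ks] by simp
  from factor_eval_merge_next[OF this assms(2-4), of z c s t "snd Y"]
  show ?thesis
    using prod_slots_lower_boundary_Cons[of ks "map (factor_eval z) Xs" "map (factor_eval z) Ys"
        "factor_eval z (J, [(c, 0, s)])" "factor_eval z Y" t] ks
    by (simp add: prod_slots_middle[OF len])
qed

lemma prod_slots_factors_merge_prev:
  assumes ks: "ks \<in> chains (length Xs + length Ys)" and "Xs \<noteq> []"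
    and "finite J" "finite (fst (last Xs))" "J \<inter> fst (last Xs) = {}"
  shows "prod_slots (map (factor_eval z) (Xs @ (J, [(c, 0, s)]) # Ys))
           (insert_at (length Xs) ks (ks ! (length Xs - 1) + t))
       = winv z J powi int t *
         prod_slots (map (factor_eval z) (butlast Xs @ (fst (last Xs) \<union> J, ratfun_mult (snd (last Xs)) [(c, t, s)]) # Ys)) ks"
proof -
  have len: "length ks = length (map (factor_eval z) (butlast Xs)) + Suc (length (map (factor_eval z) Ys))"
    using chains_length[OF ks] assms(2) by (cases Xs) auto
  have "1 \<le> ks ! (length Xs - 1)"
    using chains_nth_ge1[OF ks] assms(2) by (cases Xs) auto
  from factor_eval_merge_prev[OF this assms(3-5), of z "snd (last Xs)" c s t]
  show ?thesis
    using prod_slots_upper_boundary[of ks "map (factor_eval z) Xs" "map (factor_eval z) Ys"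
        "factor_eval z (J, [(c, 0, s)])" t] ks assms(2)
    by (simp add: prod_slots_middle[OF len] map_butlast[symmetric] last_map)
qed

lemma of_rat_power_int: "(of_rat (r powi n) :: 'a::field_char_0) = of_rat r powi n"
  by (cases "0 \<le> n") (simp_all add: power_int_def of_rat_power of_rat_inverse)

definition lower_boundary ::
  "(nat \<Rightarrow> complex) \<Rightarrow> factor list \<Rightarrow> nat set \<Rightarrow> rat \<Rightarrow> int \<Rightarrow> factor list \<Rightarrow> nat \<Rightarrow> complex" where
  "lower_boundary z Xs J c s Ys t = (case Ys of
      [] \<Rightarrow> winv z J ^ (1 + t) * of_rat (c * of_nat (1 + t) powi (- s)) * factor_sum z Xs
    | Y # Ys' \<Rightarrow> winv z J powi int t * factor_sum z (Xs @ (J \<union> fst Y, ratfun_mult [(c, t, s)] (snd Y)) # Ys'))"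

definition upper_boundary ::
  "(nat \<Rightarrow> complex) \<Rightarrow> factor list \<Rightarrow> nat set \<Rightarrow> rat \<Rightarrow> int \<Rightarrow> factor list \<Rightarrow> nat \<Rightarrow> complex" where
  "upper_boundary z Xs J c s Ys t =
     winv z J powi int t * factor_sum z (butlast Xs @ (fst (last Xs) \<union> J, ratfun_mult (snd (last Xs)) [(c, t, s)]) # Ys)"

lemma has_sum_lower_boundary:
  assumes z: "in_domain p z" and adm: "admissible p (Xs @ (J, [(c, 0, s)]) # Ys)"
    and disj: "sorted_wrt (\<lambda>A B. A \<inter> B = {}) (map fst (Xs @ (J, [(c, 0, s)]) # Ys))"
  shows "((\<lambda>ks. prod_slots (map (factor_eval z) (Xs @ (J, [(c, 0, s)]) # Ys))
                (insert_at (length Xs) ks (lower_at (length Xs) ks + t)))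
          has_sum lower_boundary z Xs J c s Ys t) (chains (length Xs + length Ys))"
proof (cases Ys)
  case Nil
  have "admissible p Xs"
    using adm by (rule admissible_prefix)
  then have "(prod_slots (map (factor_eval z) Xs) has_sum factor_sum z Xs) (chains (length Xs))"
    using summable_on_factors[OF z] by (simp add: factor_sum_def chain_sum_def)
  from has_sum_cmult_right[OF this, of "factor_eval z (J, [(c, 0, s)]) (1 + t)"]
  have "((\<lambda>ks. factor_eval z (J, [(c, 0, s)]) (1 + t) * prod_slots (map (factor_eval z) Xs) ks)
          has_sum lower_boundary z Xs J c s Ys t) (chains (length Xs))"
    by (simp add: lower_boundary_def Nil factor_eval_def of_rat_mult of_rat_power_int of_rat_add)
  then show ?thesis
    unfolding Nil list.size(3) add_0_right
    by (rule has_sum_cong[THEN iffD1, rotated]) (use prod_slots_lower_boundary_Nil[of _ "map (factor_eval z) Xs"] in \<open>auto dest!: chains_length\<close>)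
next
  case (Cons Y Ys')
  define Fs where "Fs = Xs @ (J \<union> fst Y, ratfun_mult [(c, t, s)] (snd Y)) # Ys'"
  have len: "length Fs = length Xs + length Ys"
    by (simp add: Fs_def Cons)
  have "admissible p Fs"
    using adm unfolding Fs_def Cons by (rule admissible_merge_next)
  from summable_on_factors[OF z this]
  have "(prod_slots (map (factor_eval z) Fs) has_sum factor_sum z Fs) (chains (length Xs + length Ys))"
    unfolding factor_sum_def chain_sum_def length_map len by (rule has_sum_infsum)
  from has_sum_cmult_right[OF this, of "winv z J powi int t"]
  have "((\<lambda>ks. winv z J powi int t * prod_slots (map (factor_eval z) Fs) ks)
          has_sum lower_boundary z Xs J c s Ys t) (chains (length Xs + length Ys))"
    by (simp add: lower_boundary_def Cons Fs_def)
  then show ?thesis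
  proof (rule has_sum_cong[THEN iffD1, rotated])
    fix ks assume "ks \<in> chains (length Xs + length Ys)"
    moreover have "J \<subseteq> {..<p}" "fst Y \<subseteq> {..<p}"
      using adm Cons by (auto simp: admissible_def)
    then have "finite J" "finite (fst Y)"
      using finite_subset by blast+
    moreover have "J \<inter> fst Y = {}"
      using disj Cons by (simp add: sorted_wrt_append)
    ultimately show "winv z J powi int t * prod_slots (map (factor_eval z) Fs) ks
        = prod_slots (map (factor_eval z) (Xs @ (J, [(c, 0, s)]) # Ys)) (insert_at (length Xs) ks (lower_at (length Xs) ks + t))"
      using prod_slots_factors_merge_next[of ks Xs Ys' J Y z c s t] by (simp add: Cons Fs_def)
  qed
qed

lemma has_sum_upper_boundary:
  assumes z: "in_domain p z" and adm: "admissible p (Xs @ (J, [(c, 0, s)]) # Ys)"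
    and disj: "sorted_wrt (\<lambda>A B. A \<inter> B = {}) (map fst (Xs @ (J, [(c, 0, s)]) # Ys))"
    and "Xs \<noteq> []"
  shows "((\<lambda>ks. prod_slots (map (factor_eval z) (Xs @ (J, [(c, 0, s)]) # Ys))
                (insert_at (length Xs) ks (ks ! (length Xs - 1) + t)))
          has_sum upper_boundary z Xs J c s Ys t) (chains (length Xs + length Ys))"
proof -
  define Fs where "Fs = butlast Xs @ (fst (last Xs) \<union> J, ratfun_mult (snd (last Xs)) [(c, t, s)]) # Ys"
  have len: "length Fs = length Xs + length Ys"
    using assms(4) by (cases Xs) (auto simp: Fs_def)
  have "admissible p Fs"
    using admissible_merge_prev[OF assms(4) adm] by (simp add: Fs_def)
  from summable_on_factors[OF z this]
  have "(prod_slots (map (factor_eval z) Fs) has_sum factor_sum z Fs) (chains (length Xs + length Ys))"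
    unfolding factor_sum_def chain_sum_def length_map len by (rule has_sum_infsum)
  from has_sum_cmult_right[OF this, of "winv z J powi int t"]
  have "((\<lambda>ks. winv z J powi int t * prod_slots (map (factor_eval z) Fs) ks)
          has_sum upper_boundary z Xs J c s Ys t) (chains (length Xs + length Ys))"
    by (simp add: upper_boundary_def Fs_def)
  then show ?thesis
  proof (rule has_sum_cong[THEN iffD1, rotated])
    fix ks assume "ks \<in> chains (length Xs + length Ys)"
    moreover have "last Xs \<in> set Xs"
      using assms(4) by simp
    then have "J \<subseteq> {..<p}" "fst (last Xs) \<subseteq> {..<p}"
      using adm by (auto simp: admissible_def)
    then have "finite J" "finite (fst (last Xs))"
      using finite_subset by blast+
    moreover have "J \<inter> fst (last Xs) = {}"
      using disj \<open>last Xs \<in> set Xs\<close> by (auto simp: sorted_wrt_append)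
    ultimately show "winv z J powi int t * prod_slots (map (factor_eval z) Fs) ks
        = prod_slots (map (factor_eval z) (Xs @ (J, [(c, 0, s)]) # Ys)) (insert_at (length Xs) ks (ks ! (length Xs - 1) + t))"
      using prod_slots_factors_merge_prev[of ks Xs Ys J z c s t] assms(4) by (simp add: Fs_def)
  qed
qed

lemma chain_sum_translated_factor:
  fixes z :: "nat \<Rightarrow> complex" and Xs Ys :: "factor list" and J :: "nat set" and c :: rat and s :: int
  defines "xs \<equiv> map (factor_eval z) Xs" and "ys \<equiv> map (factor_eval z) Ys"
    and "g \<equiv> factor_eval z (J, [(c, 0, s)])"
  assumes z: "in_domain p z" and adm: "admissible p (Xs @ (J, [(c, 0, s)]) # Ys)"
    and disj: "sorted_wrt (\<lambda>A B. A \<inter> B = {}) (map fst (Xs @ (J, [(c, 0, s)]) # Ys))"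
    and summable: "prod_slots (xs @ (\<lambda>k. g (k + d)) # ys) summable_on chains (Suc (length xs + length ys))"
  shows "chain_sum (xs @ (\<lambda>k. g (k + d)) # ys) = factor_sum z (Xs @ (J, [(c, 0, s)]) # Ys)
           - (\<Sum>t<d. lower_boundary z Xs J c s Ys t)
           + (if Xs = [] then 0 else \<Sum>t\<in>{1..d}. upper_boundary z Xs J c s Ys t)"
proof -
  have unshifted: "map (factor_eval z) (Xs @ (J, [(c, 0, s)]) # Ys) = xs @ g # ys"
    by (simp add: xs_def ys_def g_def)
  have lower: "((\<lambda>ks. prod_slots (xs @ g # ys) (insert_at (length xs) ks (lower_at (length xs) ks + t)))
                  has_sum lower_boundary z Xs J c s Ys t) (chains (length xs + length ys))" for t
    using has_sum_lower_boundary[OF z adm disj, of t] by (simp add: xs_def ys_def g_def)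
  have upper: "((\<lambda>ks. prod_slots (xs @ g # ys) (insert_at (length xs) ks (ks ! (length xs - 1) + t)))
                  has_sum upper_boundary z Xs J c s Ys t) (chains (length xs + length ys))" if "xs \<noteq> []" for t
    using has_sum_upper_boundary[OF z adm disj, of t] that by (simp add: xs_def ys_def g_def)
  have "prod_slots (xs @ g # ys) summable_on chains (Suc (length xs + length ys))"
    using summable_on_factors[OF z adm, unfolded unshifted] by (simp add: xs_def ys_def)
  from chain_sum_shift[OF this summable has_sum_imp_summable[OF lower] has_sum_imp_summable[OF upper]]
  have "chain_sum (xs @ (\<lambda>k. g (k + d)) # ys) = chain_sum (xs @ g # ys)
      - (\<Sum>t<d. lower_boundary z Xs J c s Ys t)
      + (if xs = [] then 0 else \<Sum>t\<in>{1..d}. upper_boundary z Xs J c s Ys t)"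
    using infsumI[OF lower] infsumI[OF upper] by simp
  moreover have "chain_sum (xs @ g # ys) = factor_sum z (Xs @ (J, [(c, 0, s)]) # Ys)"
    unfolding factor_sum_def unshifted ..
  moreover have "xs = [] \<longleftrightarrow> Xs = []"
    by (simp add: xs_def)
  ultimately show ?thesis
    by simp
qed

lemma factor_sum_shift:
  assumes z: "in_domain p z" and adm: "admissible p (Xs @ (J, [(c, d, s)]) # Ys)"
    and disj: "sorted_wrt (\<lambda>A B. A \<inter> B = {}) (map fst (Xs @ (J, [(c, d, s)]) # Ys))"
  shows "factor_sum z (Xs @ (J, [(c, d, s)]) # Ys) = winv z J powi (- int d) *
           (factor_sum z (Xs @ (J, [(c, 0, s)]) # Ys) - (\<Sum>t<d. lower_boundary z Xs J c s Ys t)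
            + (if Xs = [] then 0 else \<Sum>t\<in>{1..d}. upper_boundary z Xs J c s Ys t))"
proof -
  define xs where "xs = map (factor_eval z) Xs"
  define ys where "ys = map (factor_eval z) Ys"
  define g where "g = factor_eval z (J, [(c, 0, s)])"
  define w where "w = winv z J powi (- int d)"
  have "J \<subseteq> {..<p}"
    using adm by (auto simp: admissible_def)
  then have "w \<noteq> 0"
    using winv_nonzero[OF z] by (simp add: w_def)
  have "factor_eval z (J, [(c, d, s)]) = (\<lambda>k. w * g (k + d))"
    unfolding w_def g_def by (rule ext) (rule factor_eval_shift[OF winv_nonzero[OF z \<open>J \<subseteq> {..<p}\<close>]])
  then have shifted: "map (factor_eval z) (Xs @ (J, [(c, d, s)]) # Ys) = xs @ (\<lambda>k. w * g (k + d)) # ys"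
    by (simp add: xs_def ys_def)
  have len: "length (xs @ (\<lambda>k. g (k + d)) # ys) = Suc (length xs + length ys)"
    by simp
  have cmult: "prod_slots (xs @ (\<lambda>k. w * g (k + d)) # ys) ks = w * prod_slots (xs @ (\<lambda>k. g (k + d)) # ys) ks"
    if "ks \<in> chains (Suc (length xs + length ys))" for ks
    using chains_length[OF that] by (simp add: prod_slots_middle_cmult)
  have "prod_slots (xs @ (\<lambda>k. w * g (k + d)) # ys) summable_on chains (Suc (length xs + length ys))"
    using summable_on_factors[OF z adm, unfolded shifted] by (simp add: xs_def ys_def)
  then have "(\<lambda>ks. w * prod_slots (xs @ (\<lambda>k. g (k + d)) # ys) ks) summable_on chains (Suc (length xs + length ys))"
    by (rule summable_on_cong[THEN iffD1, rotated]) (rule cmult)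
  then have "prod_slots (xs @ (\<lambda>k. g (k + d)) # ys) summable_on chains (Suc (length xs + length ys))"
    using summable_on_cmult_right'[OF \<open>w \<noteq> 0\<close>] by blast
  from chain_sum_translated_factor[OF z admissible_replace[OF adm] _ this[unfolded xs_def ys_def g_def]] disj
  have "chain_sum (xs @ (\<lambda>k. g (k + d)) # ys) = factor_sum z (Xs @ (J, [(c, 0, s)]) # Ys)
      - (\<Sum>t<d. lower_boundary z Xs J c s Ys t)
      + (if Xs = [] then 0 else \<Sum>t\<in>{1..d}. upper_boundary z Xs J c s Ys t)"
    by (simp add: xs_def ys_def g_def)
  moreover have "factor_sum z (Xs @ (J, [(c, d, s)]) # Ys) = w * chain_sum (xs @ (\<lambda>k. g (k + d)) # ys)"
    unfolding factor_sum_def chain_sum_def shifted len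
    by (simp add: infsum_cong[OF cmult] infsum_cmult_right')
  ultimately show ?thesis
    by (simp add: w_def)
qed

definition good_factors :: "nat \<Rightarrow> nat \<Rightarrow> factor list \<Rightarrow> bool" where
  "good_factors p W Fs \<longleftrightarrow> admissible p Fs \<and> sorted_wrt (\<lambda>A B. A \<inter> B = {}) (map fst Fs) \<and>
     (\<Sum>F\<leftarrow>Fs. ratfun_weight (snd F)) \<le> W \<and> length Fs \<le> p"

lemma good_factors_replace:
  "good_factors p W (Xs @ (J, R) # Ys) \<Longrightarrow> ratfun_weight R' \<le> ratfun_weight R \<Longrightarrow>
   good_factors p W (Xs @ (J, R') # Ys)"
  using admissible_replace[of p Xs J R Ys R'] by (auto simp: good_factors_def)

lemma good_factors_prefix: "good_factors p W (Xs @ Ys) \<Longrightarrow> good_factors p W Xs"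
  using admissible_prefix by (auto simp: good_factors_def sorted_wrt_append)

lemma good_factors_merge_next:
  assumes "good_factors p W (Xs @ (J, [(c, d, s)]) # Y # Ys)"
  shows "good_factors p W (Xs @ (J \<union> fst Y, ratfun_mult [(c, t, s)] (snd Y)) # Ys)"
proof -
  have "ratfun_weight (ratfun_mult [(c, t, s)] (snd Y)) \<le> ratfun_weight [(c, d, s)] + ratfun_weight (snd Y)"
    using ratfun_weight_mult[of "[(c, t, s)]" "snd Y"] by simp
  then show ?thesis
    using assms admissible_merge_next[of p Xs J "[(c, d, s)]" Y Ys]
    by (auto simp: good_factors_def sorted_wrt_append)
qed

lemma good_factors_merge_prev:
  assumes "Xs \<noteq> []" "good_factors p W (Xs @ (J, [(c, d, s)]) # Ys)"
  shows "good_factors p W (butlast Xs @ (fst (last Xs) \<union> J, ratfun_mult (snd (last Xs)) [(c, t, s)]) # Ys)"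
proof -
  obtain Xs' X where Xs: "Xs = Xs' @ [X]"
    using assms(1) by (cases Xs rule: rev_exhaust) auto
  have "ratfun_weight (ratfun_mult (snd X) [(c, t, s)]) \<le> ratfun_weight (snd X) + ratfun_weight [(c, d, s)]"
    using ratfun_weight_mult[of "snd X" "[(c, t, s)]"] by simp
  moreover have "admissible p (Xs' @ (fst X \<union> J, ratfun_mult (snd X) [(c, t, s)]) # Ys)"
    using admissible_merge_prev[OF assms(1), of p J "[(c, d, s)]" Ys] assms(2) by (simp add: good_factors_def Xs)
  ultimately show ?thesis
    using assms(2) by (auto simp: good_factors_def sorted_wrt_append Xs)
qed

lemma La_span_factor_sum_La:
  assumes good: "good_factors p W Fs" and single: "\<forall>F\<in>set Fs. \<exists>c s. snd F = [(c, 0, s)]"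
  shows "La_span p W (\<lambda>z. factor_sum z Fs)"
proof -
  define ss where "ss = map (\<lambda>F. snd (snd (hd (snd F)))) Fs"
  have "max (ss ! i) 0 = int (ratfun_weight (snd (Fs ! i)))" if i: "i < length Fs" for i
  proof -
    obtain c s where "snd (Fs ! i) = [(c, 0, s)]"
      using single i by (meson nth_mem)
    then show ?thesis
      using i by (simp add: ss_def)
  qed
  then have "(\<Sum>i<length ss. max (ss ! i) 0) = (\<Sum>i<length Fs. int (ratfun_weight (snd (Fs ! i))))"
    by (simp add: ss_def)
  also have "\<dots> = (\<Sum>F\<leftarrow>Fs. int (ratfun_weight (snd F)))"
    by (simp add: sum_list_sum_nth atLeast0LessThan)
  also have "\<dots> = int (\<Sum>F\<leftarrow>Fs. ratfun_weight (snd F))"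
    by (induction Fs) auto
  also have "\<dots> \<le> int W"
    using good by (simp add: good_factors_def)
  finally have "la_term_ok p W ([], ss, map fst Fs)"
    using good by (auto simp: la_term_ok_def good_factors_def admissible_def ss_def)
  from La_span_cmult[OF La_span_La[OF this], where c="\<Prod>F\<leftarrow>Fs. fst (hd (snd F))"]
  show ?thesis
    by (rule La_span_cong) (simp add: factor_sum_eq_La[OF single] ss_def comp_def)
qed

text \<open>Translating the index of one factor back to shift \<open>0\<close> produces boundary terms in which that
  factor has merged with a neighbour, so they have fewer factors.\<close>
lemma La_span_factor_sum_shift:
  assumes good: "good_factors p W (Xs @ (J, [(c, d, s)]) # Ys)"
    and unshifted: "La_span p W (\<lambda>z. factor_sum z (Xs @ (J, [(c, 0, s)]) # Ys))"
    and shorter: "\<And>Gs. length Gs \<le> length Xs + length Ys \<Longrightarrow> good_factors p W Gs \<Longrightarrow>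
                    La_span p W (\<lambda>z. factor_sum z Gs)"
  shows "La_span p W (\<lambda>z. factor_sum z (Xs @ (J, [(c, d, s)]) # Ys))"
proof -
  have J: "J \<subseteq> {..<p}"
    using good by (auto simp: good_factors_def admissible_def)
  have lower: "La_span p W (\<lambda>z. lower_boundary z Xs J c s Ys t)" for t
  proof (cases Ys)
    case Nil
    have "La_span p W (\<lambda>z. winv z J powi int (1 + t) * (of_rat (c * of_nat (1 + t) powi (- s)) * factor_sum z Xs))"
      using good good_factors_prefix by (intro La_span_winv_mult[OF La_span_cmult J] shorter) (auto simp: Nil)
    then show ?thesis
      by (rule La_span_cong) (simp only: lower_boundary_def Nil list.case power_int_of_nat mult.assoc)
  next
    case (Cons Y Ys')
    have "La_span p W (\<lambda>z. winv z J powi int t * factor_sum z (Xs @ (J \<union> fst Y, ratfun_mult [(c, t, s)] (snd Y)) # Ys'))"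
      using good_factors_merge_next[of p W Xs J c d s Y Ys' t] good Cons
      by (intro La_span_winv_mult[OF _ J] shorter) auto
    then show ?thesis
      by (rule La_span_cong) (simp add: lower_boundary_def Cons)
  qed
  have upper: "La_span p W (\<lambda>z. if Xs = [] then 0 else \<Sum>t\<in>{1..d}. upper_boundary z Xs J c s Ys t)"
  proof (cases "Xs = []")
    case False
    have "La_span p W (\<lambda>z. upper_boundary z Xs J c s Ys t)" for t
      unfolding upper_boundary_def
      using good_factors_merge_prev[OF False, of p W J c d s Ys t] good False
      by (intro La_span_winv_mult[OF _ J] shorter) (auto simp: Suc_le_eq)
    then show ?thesis
      using False by (simp add: La_span_sum)
  qed (simp add: La_span_zero)
  have "La_span p W (\<lambda>z. winv z J powi (- int d) * (factor_sum z (Xs @ (J, [(c, 0, s)]) # Ys)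
          - (\<Sum>t<d. lower_boundary z Xs J c s Ys t)
          + (if Xs = [] then 0 else \<Sum>t\<in>{1..d}. upper_boundary z Xs J c s Ys t)))"
    by (intro La_span_winv_mult[OF _ J] La_span_add[OF La_span_diff[OF unshifted La_span_sum] upper] lower) simp
  then show ?thesis
    by (rule La_span_cong)
       (use factor_sum_shift good in \<open>auto simp: good_factors_def\<close>)
qed

lemma factor_list_cases:
  obtains (empty) Xs J Ys where "Fs = Xs @ (J, []) # Ys"
    | (several) Xs J x R Ys where "Fs = Xs @ (J, x # R) # Ys" "R \<noteq> []"
    | (shifted) Xs J c d s Ys where "Fs = Xs @ (J, [(c, d, s)]) # Ys" "d \<noteq> 0"
    | (base) "\<forall>F\<in>set Fs. \<exists>c s. snd F = [(c, 0, s)]"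
proof (cases "\<forall>F\<in>set Fs. \<exists>c s. snd F = [(c, 0, s)]")
  case False
  then obtain Xs J R Ys where Fs: "Fs = Xs @ (J, R) # Ys" and R: "\<nexists>c s. R = [(c, 0, s)]"
    by (metis split_list prod.collapse)
  show thesis
  proof (cases R)
    case Nil
    then show thesis
      using that(1) Fs by blast
  next
    case (Cons x R')
    show thesis
    proof (cases R')
      case Nil
      obtain c d s where "x = (c, d, s)"
        by (cases x)
      then show thesis
        using that(3) Fs R \<open>R = x # R'\<close> Nil by auto
    next
      case Cons
      then show thesis
        using that(2) Fs \<open>R = x # R'\<close> by blast
    qed
  qed
qed

text \<open>Splitting a factor into its terms and removing shifts decrease this measure without changing
  the number of factors; every other reduction step decreases the number of factors.\<close>
definition reduction_measure :: "factor list \<Rightarrow> nat" where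
  "reduction_measure Fs = (\<Sum>F\<leftarrow>Fs. length (snd F) + length (filter (\<lambda>(c, d, s). d \<noteq> 0) (snd F)))"

lemma La_span_factor_sum: "good_factors p W Fs \<Longrightarrow> La_span p W (\<lambda>z. factor_sum z Fs)"
proof (induction Fs rule: wf_induct[OF wf_measures[of "[length, reduction_measure]"]])
  case (1 Fs)
  have IH: "La_span p W (\<lambda>z. factor_sum z Gs)"
    if "length Gs < length Fs \<or> length Gs = length Fs \<and> reduction_measure Gs < reduction_measure Fs"
      "good_factors p W Gs" for Gs
    using 1 that by (auto simp: in_measures)
  have adm: "admissible p Fs"
    using "1.prems" by (simp add: good_factors_def)
  from factor_list_cases[of Fs]
  show ?case
  proof cases
    case (empty Xs J Ys)
    show ?thesis
      by (rule La_span_cong[OF La_span_zero]) (simp add: empty factor_sum_empty_factor)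
  next
    case (several Xs J x R Ys)
    have "La_span p W (\<lambda>z. factor_sum z (Xs @ (J, [x]) # Ys) + factor_sum z (Xs @ (J, R) # Ys))"
      using "1.prems" several ratfun_weight_Cons_ge[where x=x and R=R]
      by (intro La_span_add IH) (auto simp: reduction_measure_def intro: good_factors_replace)
    then show ?thesis
      by (rule La_span_cong) (use factor_sum_split adm several in simp)
  next
    case (shifted Xs J c d s Ys)
    have "La_span p W (\<lambda>z. factor_sum z (Xs @ (J, [(c, 0, s)]) # Ys))"
      using "1.prems" shifted by (intro IH) (auto simp: reduction_measure_def intro: good_factors_replace)
    with "1.prems" show ?thesis
      unfolding shifted(1) by (rule La_span_factor_sum_shift) (use IH shifted in auto)
  next
    case base
    with "1.prems" show ?thesis
      by (rule La_span_factor_sum_La)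
  qed
qed

section \<open>The series as a combination of sums over chains\<close>

definition series_factors :: "nat \<Rightarrow> (nat \<Rightarrow> nat) \<Rightarrow> (nat \<Rightarrow> nat) \<Rightarrow> (nat \<Rightarrow> nat) \<Rightarrow> factor list" where
  "series_factors p A n e = map (\<lambda>j. ({j}, series_ratfun (e j) (n j) (A j))) [0..<p]"

lemma good_factors_series_factors:
  assumes "1 \<le> p"
  shows "good_factors p (\<Sum>j<p. A j) (series_factors p A n e)"
proof -
  have "sorted_wrt (\<lambda>A B. A \<inter> B = {}) (map (\<lambda>j. {j}) [0..<p])"
    by (simp add: sorted_wrt_map sorted_wrt_iff_nth_less)
  moreover have "(\<Sum>F\<leftarrow>series_factors p A n e. ratfun_weight (snd F)) = (\<Sum>j<p. ratfun_weight (series_ratfun (e j) (n j) (A j)))"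
    by (simp add: series_factors_def comp_def interv_sum_list_conv_sum_set_nat atLeast0LessThan)
  moreover have "\<dots> \<le> (\<Sum>j<p. A j)"
    by (intro sum_mono ratfun_weight_series_ratfun)
  ultimately show ?thesis
    using assms by (auto simp: good_factors_def admissible_def series_factors_def hd_map comp_def)
qed

lemma factor_eval_series_factor:
  assumes "1 \<le> k"
  shows "of_nat k ^ e * z j powi (- int k) / pochhammer (of_nat k) (Suc m) ^ a
           = factor_eval z ({j}, series_ratfun e m a) k"
  using assms by (simp add: factor_eval_def winv_def ratfun_eval_series_ratfun power_int_minus
      power_one_over inverse_eq_divide)

lemma infsum_sum_list:
  fixes f :: "'b \<Rightarrow> 'a \<Rightarrow> 'c::{topological_comm_monoid_add, t2_space}"
  assumes "\<And>x. x \<in> set xs \<Longrightarrow> f x summable_on A"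
  shows "infsum (\<lambda>a. \<Sum>x\<leftarrow>xs. f x a) A = (\<Sum>x\<leftarrow>xs. infsum (f x) A)"
    and "(\<lambda>a. \<Sum>x\<leftarrow>xs. f x a) summable_on A"
  using assms by (induction xs) (simp_all add: infsum_add summable_on_add)

lemma Sser_eq_sum_factor_sum:
  assumes z: "in_domain p z" and "1 \<le> p"
  shows "Sser p A n P z = (\<Sum>(e, c)\<leftarrow>P. of_rat c * factor_sum z (series_factors p A n e))"
proof -
  define g where "g = (\<lambda>(e, c) ks. of_rat c * prod_slots (map (factor_eval z) (series_factors p A n e)) ks)"
  have len: "length (series_factors p A n e) = p" for e
    by (simp add: series_factors_def)
  have "poly_eval P ks * (\<Prod>j<p. z j powi (- int (ks ! j)) / pochhammer (of_nat (ks ! j)) (n j + 1) ^ A j)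
          = (\<Sum>x\<leftarrow>P. g x ks)" if ks: "ks \<in> chains p" for ks
  proof -
    have "(\<Prod>j<p. of_nat (ks ! j) ^ e j) * (\<Prod>j<p. z j powi (- int (ks ! j)) / pochhammer (of_nat (ks ! j)) (n j + 1) ^ A j)
            = prod_slots (map (factor_eval z) (series_factors p A n e)) ks" for e
    proof -
      have "length ks = length (map (factor_eval z) (series_factors p A n e))"
        using chains_length[OF ks] by (simp add: len)
      note slots = prod_slots_conv_prod[OF this]
      show ?thesis
        unfolding prod.distrib[symmetric] slots
        by (intro prod.cong) (simp_all add: len series_factors_def factor_eval_series_factor[OF chains_nth_ge1[OF ks]])
    qed
    then show ?thesis
      unfolding poly_eval_def chains_length[OF ks] g_def sum_list_mult_const[symmetric]
      by (intro arg_cong[where f=sum_list] map_cong) (auto simp: mult.assoc)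
  qed
  then have "Sser p A n P z = infsum (\<lambda>ks. \<Sum>x\<leftarrow>P. g x ks) (chains p)"
    unfolding Sser_def by (rule infsum_cong)
  also have "\<dots> = (\<Sum>x\<leftarrow>P. infsum (g x) (chains p))"
  proof (rule infsum_sum_list)
    have "prod_slots (map (factor_eval z) (series_factors p A n e)) summable_on chains p" for e
      using summable_on_factors[OF z, of "series_factors p A n e"] good_factors_series_factors[OF assms(2)]
      by (simp add: len good_factors_def)
    then show "g x summable_on chains p" for x
      by (cases x) (simp add: g_def summable_on_cmult_right)
  qed
  also have "\<dots> = (\<Sum>(e, c)\<leftarrow>P. of_rat c * factor_sum z (series_factors p A n e))"
    by (intro arg_cong[where f=sum_list] map_cong)
       (auto simp: g_def factor_sum_def chain_sum_def len infsum_cmult_right')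
  finally show ?thesis .
qed

theorem mainTheorem1:
  fixes p :: nat and A n :: "nat \<Rightarrow> nat" and P :: "((nat \<Rightarrow> nat) \<times> rat) list"
  assumes "p \<ge> 1" and "\<forall>j<p. A j \<ge> 1"
  shows "\<exists>T :: (((nat \<Rightarrow> int) \<times> rat) list \<times> int list \<times> nat set list) list.
    (\<forall>(L, s, I)\<in>set T. length s \<le> p \<and> length I = length s \<and>
        (\<forall>i<length s. I ! i \<noteq> {} \<and> I ! i \<subseteq> {..<p}) \<and>
        (\<Sum>i<length s. max (s ! i) 0) \<le> int (\<Sum>j<p. A j)) \<and>
    (\<forall>z :: nat \<Rightarrow> complex. norm (z 0) > 1 \<and> (\<forall>j<p. norm (z j) \<ge> 1) \<longrightarrow>
        Sser p A n P z =
        (\<Sum>(L, s, I)\<leftarrow>T. laurent_eval L p z * La s (map (\<lambda>J. 1 / (\<Prod>j\<in>J. z j)) I)))"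
proof -
  have "La_span p (\<Sum>j<p. A j) (\<lambda>z. \<Sum>(e, c)\<leftarrow>P. of_rat c * factor_sum z (series_factors p A n e))"
    using La_span_cmult[OF La_span_factor_sum[OF good_factors_series_factors[OF assms(1)]]]
    by (intro La_span_sum_list) (simp add: split_beta)
  then have "La_span p (\<Sum>j<p. A j) (Sser p A n P)"
    by (rule La_span_cong) (rule Sser_eq_sum_factor_sum[symmetric, OF _ assms(1)])
  then show ?thesis
    unfolding La_span_def la_term_ok_def la_comb_def in_domain_def by auto
qed

end
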